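(* Let $G=(V,E,L)$ be a graph with loops and let $V^+:=\{i\in V:\{i,i\}\in L^+\}$ be a stable set of $(V,E)$. Suppose that $(V,E)$ is a chordless cycle. Then $\mathrm{QP}(G)$ has an SOC-representable formulation whose numbers of variables and constraints are bounded by a polynomial in $|V|$.
   Context: A graph with loops is $G=(V,E,L)$: $V$ finite node set, $E$ a set of unordered pairs of distinct nodes, $L$ a set of loops $\{i,i\}$ partitioned as $L=L^-\cup L^+$ (minus/plus loops). $\mathrm{QP}(G):=\mathrm{conv}\{z\in\mathbb{R}^{V\cup E\cup L}: z_{ii}\ge z_i^2\ \forall\{i,i\}\in L^+,\ z_{ii}\le z_i^2\ \forall \{i,i\}\in L^-,\ z_{ij}=z_iz_j\ \forall \{i,j\}\in E,\ z_i\in[0,1]\ \forall i\in V\}$. A convex set is SOC-representable if it is the projection of a set described by finitely many linear constraints and (rotated) second-order cone constraints composed with affine maps. *)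

theory Defs
  imports "HOL-Analysis.Analysis"
begin

text \<open>Coordinates of R^(V \<union> E \<union> L): node variables z_i, edge variables z_ij
  (edge {i,j} represented by the two-element set), loop variables z_ii.\<close>
datatype 'a coord = CV 'a | CE "'a set" | CL 'a

text \<open>A graph with loops G = (V,E,L), L = L^- \<union> L^+ (a partition). A loop {i,i} is
  represented by the node i; Lm / Lp are the nodes carrying minus / plus loops.\<close>
definition graph_with_loops :: "'a set \<Rightarrow> 'a set set \<Rightarrow> 'a set \<Rightarrow> 'a set \<Rightarrow> bool" where
  "graph_with_loops V E Lm Lp \<longleftrightarrow> finite V \<and>
     (\<forall>e\<in>E. \<exists>i j. i \<in> V \<and> j \<in> V \<and> i \<noteq> j \<and> e = {i, j}) \<and>
     Lm \<subseteq> V \<and> Lp \<subseteq> V \<and> Lm \<inter> Lp = {}"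

definition coords :: "'a set \<Rightarrow> 'a set set \<Rightarrow> 'a set \<Rightarrow> 'a set \<Rightarrow> 'a coord set" where
  "coords V E Lm Lp = CV ` V \<union> CE ` E \<union> CL ` (Lm \<union> Lp)"

text \<open>Points of R^I for a finite index set I are functions vanishing outside I.\<close>
definition conv_hull :: "('b \<Rightarrow> real) set \<Rightarrow> ('b \<Rightarrow> real) set" where
  "conv_hull S = {z. \<exists>(k::nat) (c::nat \<Rightarrow> real) p.
      (\<forall>i<k. 0 \<le> c i \<and> p i \<in> S) \<and> (\<Sum>i<k. c i) = 1 \<and>
      z = (\<lambda>x. \<Sum>i<k. c i * p i x)}"

definition QP :: "'a set \<Rightarrow> 'a set set \<Rightarrow> 'a set \<Rightarrow> 'a set \<Rightarrow> ('a coord \<Rightarrow> real) set" where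
  "QP V E Lm Lp = conv_hull {z.
      (\<forall>c. c \<notin> coords V E Lm Lp \<longrightarrow> z c = 0) \<and>
      (\<forall>i\<in>Lp. z (CL i) \<ge> (z (CV i))\<^sup>2) \<and>
      (\<forall>i\<in>Lm. z (CL i) \<le> (z (CV i))\<^sup>2) \<and>
      (\<forall>i j. {i, j} \<in> E \<longrightarrow> z (CE {i, j}) = z (CV i) * z (CV j)) \<and>
      (\<forall>i\<in>V. 0 \<le> z (CV i) \<and> z (CV i) \<le> 1)}"

definition chordless_cycle :: "'a set \<Rightarrow> 'a set set \<Rightarrow> bool" where
  "chordless_cycle V E \<longleftrightarrow> (\<exists>(n::nat) f. n \<ge> 3 \<and> bij_betw f {..<n} V \<and>
      E = {{f i, f ((i + 1) mod n)} | i. i < n})"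

definition stable_set :: "'a set set \<Rightarrow> 'a set \<Rightarrow> bool" where
  "stable_set E S \<longleftrightarrow> (\<forall>i\<in>S. \<forall>j\<in>S. {i, j} \<notin> E)"

text \<open>SOC formulations. Variables are Inl c (c an original coordinate in I) and
  Inr j (j < m, auxiliary). An affine functional is a pair (a, b) evaluated as
  sum over the variables of a v * x v, plus b.\<close>
type_synonym 'b affine = "('b \<Rightarrow> real) \<times> real"

definition vars :: "'b set \<Rightarrow> nat \<Rightarrow> ('b + nat) set" where
  "vars I m = Inl ` I \<union> Inr ` {..<m}"

definition aff_eval :: "'b set \<Rightarrow> nat \<Rightarrow> ('b + nat) affine \<Rightarrow> ('b + nat \<Rightarrow> real) \<Rightarrow> real" where
  "aff_eval I m a x = (\<Sum>v\<in>vars I m. fst a v * x v) + snd a"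

record 'b soc_formulation =
  n_aux :: nat
  lin :: "'b affine list"
  soc :: "('b affine list \<times> 'b affine) list"
  rsoc :: "('b affine list \<times> 'b affine \<times> 'b affine) list"

definition feasible :: "'b set \<Rightarrow> ('b + nat) soc_formulation \<Rightarrow> ('b + nat \<Rightarrow> real) \<Rightarrow> bool" where
  "feasible I F x \<longleftrightarrow> (let ev = aff_eval I (n_aux F) in
     (\<forall>a \<in> set (lin F). ev a x \<le> 0) \<and>
     (\<forall>(A, t) \<in> set (soc F). sqrt (\<Sum>a\<leftarrow>A. (ev a x)\<^sup>2) \<le> ev t x) \<and>
     (\<forall>(A, s, t) \<in> set (rsoc F). (\<Sum>a\<leftarrow>A. (ev a x)\<^sup>2) \<le> ev s x * ev t x \<and>
                                  0 \<le> ev s x \<and> 0 \<le> ev t x))"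

definition projected_set :: "'b set \<Rightarrow> ('b + nat) soc_formulation \<Rightarrow> ('b \<Rightarrow> real) set" where
  "projected_set I F = {(\<lambda>c. if c \<in> I then x (Inl c) else 0) | x. feasible I F x}"

definition num_vars :: "'b set \<Rightarrow> ('b + nat) soc_formulation \<Rightarrow> nat" where
  "num_vars I F = card I + n_aux F"

definition num_constraints :: "('b + nat) soc_formulation \<Rightarrow> nat" where
  "num_constraints F = length (lin F) + length (soc F) + length (rsoc F)"

end

theory Submission
  imports Defs
begin

(* The n-cycle 0, ..., n-1 has the path decomposition with bags B_k = {0, n-1, k, k+1, k+2},
   k < n - 2, in which every node shares a bag with both of its neighbours. The formulation has, for
   every bag, a probability distribution mu_k on the subsets of B_k, with equal marginals on the
   intersections of consecutive bags. Node and edge variables are marginal probabilities, a minus loop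
   is bounded by z_ii <= z_i, and a plus-loop node p with neighbours N(p) gets variables w_p(T),
   T a subset of N(p), with the rotated cone constraints
     Pr[p in A, A n N(p) = T]^2 <= w_p(T) * Pr[A n N(p) = T]   and   z_pp >= sum_T w_p(T).

   Independent random subsets lift every point of the nonconvex set to a feasible point, and the
   feasible set is convex, so QP(G) lies in the projection. Conversely, by the running intersection
   property the bag distributions glue to one distribution D on the subsets of the cycle. Averaging
   over A ~ D the 0/1 vector of A in which each plus-loop node p is replaced by Pr[p in A | A n N(p)]
   gives a point of QP(G); edge products stay exact because no two plus-loop nodes are adjacent. This
   point agrees with the projection except on loop coordinates, where the cone constraints (plus loops)
   and z_i^2 <= z_i (minus loops) show that the projection only moves in directions in which QP(G) is
   closed. *)

section \<open>Marginals of distributions on subsets\<close>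

definition marginal :: "'v set \<Rightarrow> ('v set \<Rightarrow> real) \<Rightarrow> 'v set \<Rightarrow> 'v set \<Rightarrow> real" where
  "marginal U D C T = sum D {A. A \<subseteq> U \<and> A \<inter> C = T}"

lemma finite_subsets_with: "finite U \<Longrightarrow> finite {A. A \<subseteq> U \<and> P A}"
  by (rule finite_subset[of _ "Pow U"]) auto

lemma marginal_nonneg: "(\<And>A. A \<subseteq> U \<Longrightarrow> 0 \<le> D A) \<Longrightarrow> 0 \<le> marginal U D C T"
  unfolding marginal_def by (rule sum_nonneg) auto

lemma marginal_self: "T \<subseteq> U \<Longrightarrow> marginal U D U T = D T"
proof -
  assume "T \<subseteq> U"
  then have "{A. A \<subseteq> U \<and> A \<inter> U = T} = {T}" by auto
  then show ?thesis unfolding marginal_def by simp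
qed

lemma le_marginal:
  assumes "finite U" "\<And>A. A \<subseteq> U \<Longrightarrow> 0 \<le> D A" "T \<subseteq> U"
  shows "D T \<le> marginal U D C (T \<inter> C)"
  unfolding marginal_def by (rule member_le_sum) (use assms finite_subsets_with in auto)

lemma marginal_insert_split:
  assumes "finite U" "a \<notin> C" "T \<subseteq> C"
  shows "marginal U D C T = marginal U D (insert a C) (insert a T) + marginal U D (insert a C) T"
proof -
  have "{A. A \<subseteq> U \<and> A \<inter> C = T} =
     {A. A \<subseteq> U \<and> A \<inter> insert a C = insert a T} \<union> {A. A \<subseteq> U \<and> A \<inter> insert a C = T}"
    using assms by auto
  moreover have "sum D ({A. A \<subseteq> U \<and> A \<inter> insert a C = insert a T} \<union> {A. A \<subseteq> U \<and> A \<inter> insert a C = T})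
      = marginal U D (insert a C) (insert a T) + marginal U D (insert a C) T"
    unfolding marginal_def
    by (rule sum.union_disjoint) (use assms finite_subsets_with in auto)
  ultimately show ?thesis unfolding marginal_def by simp
qed

lemma sum_subsets_Int_eq:
  assumes "finite W" "C \<subseteq> W" "T \<subseteq> C"
  shows "sum h {A. A \<subseteq> W \<and> A \<inter> C = T} = sum (\<lambda>R. h (T \<union> R)) (Pow (W - C))"
  by (rule sum.reindex_bij_witness[where j="\<lambda>A. A - C" and i="\<lambda>R. T \<union> R"])
    (use assms in \<open>auto simp: Int_Diff_Un\<close>)

lemma marginal_coarsen:
  assumes "finite U" "finite C" "C' \<subseteq> C"
  shows "marginal U D C' T' = sum (marginal U D C) {T. T \<subseteq> C \<and> T \<inter> C' = T'}"
proof -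
  have "marginal U D C' T'
      = sum (\<lambda>T. sum D {A \<in> {A. A \<subseteq> U \<and> A \<inter> C' = T'}. A \<inter> C = T}) {T. T \<subseteq> C \<and> T \<inter> C' = T'}"
    unfolding marginal_def by (rule sum.group[symmetric]) (use assms finite_subsets_with in auto)
  also have "\<dots> = sum (marginal U D C) {T. T \<subseteq> C \<and> T \<inter> C' = T'}"
    unfolding marginal_def by (intro sum.cong refl arg_cong[where f="sum D"]) (use assms in auto)
  finally show ?thesis .
qed

lemma marginal_eq_on_subset:
  assumes "finite U" "finite U'" "finite C" "C' \<subseteq> C"
    and "\<And>T. T \<subseteq> C \<Longrightarrow> marginal U D C T = marginal U' D' C T"
  shows "marginal U D C' T' = marginal U' D' C' T'"
  using assms by (simp add: marginal_coarsen[of U C C'] marginal_coarsen[of U' C C'])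

lemma sum_Pow_marginal:
  assumes "finite U" "finite C"
  shows "(\<Sum>A\<in>Pow U. D A * h (A \<inter> C)) = (\<Sum>T\<in>Pow C. marginal U D C T * h T)"
proof -
  have "(\<Sum>T\<in>Pow C. \<Sum>A\<in>{A \<in> Pow U. A \<inter> C = T}. D A * h (A \<inter> C)) = (\<Sum>A\<in>Pow U. D A * h (A \<inter> C))"
    by (rule sum.group) (use assms in auto)
  moreover have "(\<Sum>A\<in>{A \<in> Pow U. A \<inter> C = T}. D A * h (A \<inter> C)) = marginal U D C T * h T" for T
    unfolding marginal_def sum_distrib_right by (rule sum.cong) auto
  ultimately show ?thesis by simp
qed

lemma marginal_glue_left:
  assumes fU: "finite U" and fB: "finite B" and nonneg: "\<And>A. A \<subseteq> U \<Longrightarrow> 0 \<le> D A"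
    and consistent: "\<And>T. T \<subseteq> B \<inter> U \<Longrightarrow> marginal U D (B \<inter> U) T = marginal B \<mu> (B \<inter> U) T"
    and T: "T \<subseteq> U"
  shows "marginal (U \<union> B) (\<lambda>A. D (A \<inter> U) * \<mu> (A \<inter> B) / marginal B \<mu> (B \<inter> U) (A \<inter> (B \<inter> U))) U T = D T"
proof -
  define S where "S = B \<inter> U"
  define m where "m = marginal B \<mu> S"
  have "marginal (U \<union> B) (\<lambda>A. D (A \<inter> U) * \<mu> (A \<inter> B) / m (A \<inter> S)) U T
      = (\<Sum>R\<in>Pow (U \<union> B - U). D ((T \<union> R) \<inter> U) * \<mu> ((T \<union> R) \<inter> B) / m ((T \<union> R) \<inter> S))"
    unfolding marginal_def by (rule sum_subsets_Int_eq) (use fU fB T in auto)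
  also have "\<dots> = (\<Sum>R\<in>Pow (B - S). D T * (\<mu> ((T \<inter> S) \<union> R) / m (T \<inter> S)))"
  proof (rule sum.cong)
    show "Pow (U \<union> B - U) = Pow (B - S)" unfolding S_def by blast
    fix R assume "R \<in> Pow (B - S)"
    then have "(T \<union> R) \<inter> U = T" "(T \<union> R) \<inter> B = (T \<inter> S) \<union> R" "(T \<union> R) \<inter> S = T \<inter> S"
      using T unfolding S_def by auto
    then show "D ((T \<union> R) \<inter> U) * \<mu> ((T \<union> R) \<inter> B) / m ((T \<union> R) \<inter> S) = D T * (\<mu> ((T \<inter> S) \<union> R) / m (T \<inter> S))"
      by simp
  qed
  also have "\<dots> = D T * ((\<Sum>R\<in>Pow (B - S). \<mu> ((T \<inter> S) \<union> R)) / m (T \<inter> S))"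
    by (simp add: sum_distrib_left sum_divide_distrib)
  also have "(\<Sum>R\<in>Pow (B - S). \<mu> ((T \<inter> S) \<union> R)) = m (T \<inter> S)"
    unfolding m_def marginal_def by (rule sum_subsets_Int_eq[symmetric]) (use fB S_def in auto)
  also have "D T * (m (T \<inter> S) / m (T \<inter> S)) = D T"
  proof (cases "m (T \<inter> S) = 0")
    case True
    have "D T \<le> marginal U D S (T \<inter> S)" by (rule le_marginal[OF fU nonneg T])
    also have "\<dots> = 0" using True consistent[of "T \<inter> S"] unfolding m_def S_def by (simp add: le_infI2)
    finally show ?thesis using nonneg[OF T] by simp
  qed simp
  finally show ?thesis unfolding m_def S_def .
qed

lemma marginal_glue:
  assumes fU: "finite U" and fB: "finite B"
    and nonneg_D: "\<And>A. A \<subseteq> U \<Longrightarrow> 0 \<le> D A" and nonneg_\<mu>: "\<And>A. A \<subseteq> B \<Longrightarrow> 0 \<le> \<mu> A"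
    and consistent: "\<And>T. T \<subseteq> B \<inter> U \<Longrightarrow> marginal U D (B \<inter> U) T = marginal B \<mu> (B \<inter> U) T"
  obtains D' where "\<And>A. A \<subseteq> U \<union> B \<Longrightarrow> 0 \<le> D' A"
    and "\<And>T. T \<subseteq> U \<Longrightarrow> marginal (U \<union> B) D' U T = D T"
    and "\<And>T. T \<subseteq> B \<Longrightarrow> marginal (U \<union> B) D' B T = \<mu> T"
proof
  \<comment> \<open>glue the two distributions conditionally independently given the intersection\<close>
  define D' where "D' A = D (A \<inter> U) * \<mu> (A \<inter> B) / marginal B \<mu> (B \<inter> U) (A \<inter> (B \<inter> U))" for A
  show "0 \<le> D' A" if "A \<subseteq> U \<union> B" for A
    unfolding D'_def using nonneg_D nonneg_\<mu> marginal_nonneg[of B \<mu>] by (simp add: Int_lower2)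
  show "marginal (U \<union> B) D' U T = D T" if "T \<subseteq> U" for T
    unfolding D'_def by (rule marginal_glue_left[OF fU fB nonneg_D consistent that])
  have "marginal U D (U \<inter> B) (A \<inter> (U \<inter> B)) = marginal B \<mu> (B \<inter> U) (A \<inter> (B \<inter> U))" for A
    using consistent[of "A \<inter> (B \<inter> U)"] by (simp add: Int_commute[of U B] le_infI2)
  then have D'_swap: "D' = (\<lambda>A. \<mu> (A \<inter> B) * D (A \<inter> U) / marginal U D (U \<inter> B) (A \<inter> (U \<inter> B)))"
    unfolding D'_def by (simp add: mult.commute)
  show "marginal (U \<union> B) D' B T = \<mu> T" if "T \<subseteq> B" for T
    unfolding D'_swap Un_commute[of U B]
    by (rule marginal_glue_left[OF fB fU nonneg_\<mu> _ that]) (use consistent in \<open>auto simp: Int_commute\<close>)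
qed

lemma marginal_glue_step:
  fixes B :: "nat \<Rightarrow> 'v set" and \<mu> :: "nat \<Rightarrow> 'v set \<Rightarrow> real"
  assumes finite: "\<And>j. finite (B j)"
    and running_intersection: "B (Suc k) \<inter> (\<Union>j\<le>k. B j) \<subseteq> B k"
    and nonneg: "\<And>T. T \<subseteq> B (Suc k) \<Longrightarrow> 0 \<le> \<mu> (Suc k) T"
    and consistent: "\<And>T. T \<subseteq> B k \<inter> B (Suc k) \<Longrightarrow>
      marginal (B k) (\<mu> k) (B k \<inter> B (Suc k)) T = marginal (B (Suc k)) (\<mu> (Suc k)) (B k \<inter> B (Suc k)) T"
    and D_nonneg: "\<And>A. A \<subseteq> (\<Union>j\<le>k. B j) \<Longrightarrow> 0 \<le> D A"
    and D_marginal: "\<And>j T. j \<le> k \<Longrightarrow> T \<subseteq> B j \<Longrightarrow> marginal (\<Union>j\<le>k. B j) D (B j) T = \<mu> j T"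
  obtains D' where "\<And>A. A \<subseteq> (\<Union>j\<le>Suc k. B j) \<Longrightarrow> 0 \<le> D' A"
    and "\<And>j T. j \<le> Suc k \<Longrightarrow> T \<subseteq> B j \<Longrightarrow> marginal (\<Union>j\<le>Suc k. B j) D' (B j) T = \<mu> j T"
proof -
  define U where "U = (\<Union>j\<le>k. B j)"
  have fU: "finite U" unfolding U_def using finite by auto
  have BU: "B (Suc k) \<inter> U \<subseteq> B k \<inter> B (Suc k)" using running_intersection unfolding U_def by auto
  have consistent_U: "marginal U D (B (Suc k) \<inter> U) T = marginal (B (Suc k)) (\<mu> (Suc k)) (B (Suc k) \<inter> U) T"
    if "T \<subseteq> B (Suc k) \<inter> U" for T
  proof -
    have "marginal U D (B (Suc k) \<inter> U) T = marginal (B k) (\<mu> k) (B (Suc k) \<inter> U) T"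
      by (rule marginal_eq_on_subset[OF fU finite finite])
        (use BU D_marginal in \<open>auto simp: marginal_self U_def\<close>)
    also have "\<dots> = marginal (B (Suc k)) (\<mu> (Suc k)) (B (Suc k) \<inter> U) T"
      by (rule marginal_eq_on_subset[where C="B k \<inter> B (Suc k)"]) (use finite BU consistent in auto)
    finally show ?thesis .
  qed
  obtain D' where D'_nonneg: "\<And>A. A \<subseteq> U \<union> B (Suc k) \<Longrightarrow> 0 \<le> D' A"
    and D'_U: "\<And>T. T \<subseteq> U \<Longrightarrow> marginal (U \<union> B (Suc k)) D' U T = D T"
    and D'_Suc: "\<And>T. T \<subseteq> B (Suc k) \<Longrightarrow> marginal (U \<union> B (Suc k)) D' (B (Suc k)) T = \<mu> (Suc k) T"
    by (rule marginal_glue[OF fU finite _ nonneg consistent_U]) (use D_nonneg U_def in auto)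
  have D'_marginal: "marginal (U \<union> B (Suc k)) D' (B j) T = \<mu> j T" if "j \<le> Suc k" "T \<subseteq> B j" for j T
  proof (cases "j = Suc k")
    case True
    then show ?thesis using D'_Suc that by simp
  next
    case False
    then have "j \<le> k" using that by simp
    then have "B j \<subseteq> U" unfolding U_def by auto
    have "marginal (U \<union> B (Suc k)) D' (B j) T = marginal U D (B j) T"
    proof (rule marginal_eq_on_subset[OF _ fU fU \<open>B j \<subseteq> U\<close>])
      show "finite (U \<union> B (Suc k))" using fU finite by simp
      show "marginal (U \<union> B (Suc k)) D' U T' = marginal U D U T'" if "T' \<subseteq> U" for T'
        using D'_U that by (simp add: marginal_self)
    qed
    also have "\<dots> = \<mu> j T" using D_marginal \<open>j \<le> k\<close> that unfolding U_def by simp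
    finally show ?thesis .
  qed
  have "(\<Union>j\<le>Suc k. B j) = U \<union> B (Suc k)" unfolding U_def by (auto simp: atMost_Suc)
  then show ?thesis using D'_nonneg D'_marginal by (intro that[of D']) simp_all
qed

lemma marginal_glue_chain:
  fixes B :: "nat \<Rightarrow> 'v set" and \<mu> :: "nat \<Rightarrow> 'v set \<Rightarrow> real"
  assumes finite: "\<And>k. finite (B k)"
    and running_intersection: "\<And>k. Suc k < N \<Longrightarrow> B (Suc k) \<inter> (\<Union>j\<le>k. B j) \<subseteq> B k"
    and nonneg: "\<And>k T. k < N \<Longrightarrow> T \<subseteq> B k \<Longrightarrow> 0 \<le> \<mu> k T"
    and consistent: "\<And>k T. Suc k < N \<Longrightarrow> T \<subseteq> B k \<inter> B (Suc k) \<Longrightarrow>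
      marginal (B k) (\<mu> k) (B k \<inter> B (Suc k)) T = marginal (B (Suc k)) (\<mu> (Suc k)) (B k \<inter> B (Suc k)) T"
    and "0 < N"
  obtains D where "\<And>A. A \<subseteq> (\<Union>j<N. B j) \<Longrightarrow> 0 \<le> D A"
    and "\<And>j T. j < N \<Longrightarrow> T \<subseteq> B j \<Longrightarrow> marginal (\<Union>j<N. B j) D (B j) T = \<mu> j T"
proof -
  have "\<exists>D. (\<forall>A. A \<subseteq> (\<Union>j\<le>k. B j) \<longrightarrow> 0 \<le> D A) \<and>
          (\<forall>j T. j \<le> k \<longrightarrow> T \<subseteq> B j \<longrightarrow> marginal (\<Union>j\<le>k. B j) D (B j) T = \<mu> j T)"
    if "k < N" for k
    using that
  proof (induction k)
    case 0
    then show ?case by (intro exI[of _ "\<mu> 0"]) (simp add: nonneg marginal_self)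
  next
    case (Suc k)
    then have "k < N" by simp
    with Suc.IH obtain D where D_nonneg: "\<And>A. A \<subseteq> (\<Union>j\<le>k. B j) \<Longrightarrow> 0 \<le> D A"
      and D_marginal: "\<And>j T. j \<le> k \<Longrightarrow> T \<subseteq> B j \<Longrightarrow> marginal (\<Union>j\<le>k. B j) D (B j) T = \<mu> j T"
      by blast
    have "B (Suc k) \<inter> (\<Union>j\<le>k. B j) \<subseteq> B k" by (rule running_intersection[OF Suc.prems])
    moreover have "0 \<le> \<mu> (Suc k) T" if "T \<subseteq> B (Suc k)" for T using nonneg Suc.prems that .
    moreover have "marginal (B k) (\<mu> k) (B k \<inter> B (Suc k)) T = marginal (B (Suc k)) (\<mu> (Suc k)) (B k \<inter> B (Suc k)) T"
      if "T \<subseteq> B k \<inter> B (Suc k)" for T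
      using consistent Suc.prems that .
    ultimately obtain D' where "\<And>A. A \<subseteq> (\<Union>j\<le>Suc k. B j) \<Longrightarrow> 0 \<le> D' A"
      and "\<And>j T. j \<le> Suc k \<Longrightarrow> T \<subseteq> B j \<Longrightarrow> marginal (\<Union>j\<le>Suc k. B j) D' (B j) T = \<mu> j T"
      using marginal_glue_step[OF finite _ _ _ D_nonneg D_marginal] by blast
    then show ?case by blast
  qed
  from this[of "N - 1"] obtain D where D_nonneg: "\<forall>A. A \<subseteq> (\<Union>j\<le>N - 1. B j) \<longrightarrow> 0 \<le> D A"
    and D_marginal: "\<forall>j T. j \<le> N - 1 \<longrightarrow> T \<subseteq> B j \<longrightarrow> marginal (\<Union>j\<le>N - 1. B j) D (B j) T = \<mu> j T"
    using \<open>0 < N\<close> by auto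
  have "{..N - 1} = {..<N}" using \<open>0 < N\<close> by auto
  then show ?thesis using D_nonneg D_marginal by (intro that[of D]) simp_all
qed

section \<open>Independent random subsets\<close>

definition indep_prob :: "'v set \<Rightarrow> ('v \<Rightarrow> real) \<Rightarrow> 'v set \<Rightarrow> real" where
  "indep_prob B x T = (\<Prod>i\<in>T. x i) * (\<Prod>i\<in>B - T. 1 - x i)"

lemma sum_indep_prob: "finite B \<Longrightarrow> sum (indep_prob B x) (Pow B) = 1"
  using prod_add[of B x "\<lambda>i. 1 - x i"] by (simp add: indep_prob_def)

lemma indep_prob_nonneg: "(\<And>i. i \<in> B \<Longrightarrow> 0 \<le> x i \<and> x i \<le> 1) \<Longrightarrow> T \<subseteq> B \<Longrightarrow> 0 \<le> indep_prob B x T"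
  unfolding indep_prob_def by (intro mult_nonneg_nonneg prod_nonneg) auto

lemma indep_prob_Un:
  assumes "finite B" "C \<subseteq> B" "T \<subseteq> C" "R \<subseteq> B - C"
  shows "indep_prob B x (T \<union> R) = indep_prob C x T * indep_prob (B - C) x R"
proof -
  have f: "finite T" "finite R" "finite (C - T)" "finite (B - C - R)"
    using assms by (auto intro: finite_subset)
  have "(\<Prod>i\<in>T \<union> R. x i) = (\<Prod>i\<in>T. x i) * (\<Prod>i\<in>R. x i)"
    by (rule prod.union_disjoint) (use f assms in auto)
  moreover have "B - (T \<union> R) = (C - T) \<union> (B - C - R)" using assms by auto
  moreover have "(\<Prod>i\<in>(C - T) \<union> (B - C - R). 1 - x i) = (\<Prod>i\<in>C - T. 1 - x i) * (\<Prod>i\<in>B - C - R. 1 - x i)"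
    by (rule prod.union_disjoint) (use f assms in auto)
  ultimately show ?thesis unfolding indep_prob_def by (simp add: ac_simps)
qed

lemma marginal_indep_prob:
  assumes "finite B" "C \<subseteq> B" "T \<subseteq> C"
  shows "marginal B (indep_prob B x) C T = indep_prob C x T"
proof -
  have "marginal B (indep_prob B x) C T = (\<Sum>R\<in>Pow (B - C). indep_prob B x (T \<union> R))"
    unfolding marginal_def by (rule sum_subsets_Int_eq) (use assms in auto)
  also have "\<dots> = (\<Sum>R\<in>Pow (B - C). indep_prob C x T * indep_prob (B - C) x R)"
    by (rule sum.cong) (use indep_prob_Un assms in auto)
  also have "\<dots> = indep_prob C x T * sum (indep_prob (B - C) x) (Pow (B - C))"
    by (rule sum_distrib_left[symmetric])
  also have "\<dots> = indep_prob C x T" using sum_indep_prob[of "B - C" x] assms by simp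
  finally show ?thesis .
qed

lemma indep_prob_insert:
  assumes "p \<notin> C" "T \<subseteq> C" "finite C"
  shows "indep_prob (insert p C) x (insert p T) = x p * indep_prob C x T"
proof -
  have "p \<notin> T" "insert p C - insert p T = C - T" "finite T"
    using assms finite_subset by auto
  then show ?thesis unfolding indep_prob_def by simp
qed

section \<open>Convexity of rotated second-order cones\<close>

lemma rotated_cone_add:
  fixes a1 a2 s1 s2 t1 t2 :: real
  assumes "a1\<^sup>2 \<le> s1 * t1" "a2\<^sup>2 \<le> s2 * t2" "0 \<le> s1" "0 \<le> s2" "0 \<le> t1" "0 \<le> t2"
  shows "(a1 + a2)\<^sup>2 \<le> (s1 + s2) * (t1 + t2)"
proof -
  have "(a1 * a2)\<^sup>2 \<le> (s1 * t1) * (s2 * t2)"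
    using assms by (simp add: power_mult_distrib mult_mono)
  moreover have "(s1 * t2 + s2 * t1)\<^sup>2 = 4 * ((s1 * t1) * (s2 * t2)) + (s1 * t2 - s2 * t1)\<^sup>2"
    by (simp add: power2_eq_square algebra_simps)
  moreover have "(2 * (a1 * a2))\<^sup>2 = 4 * (a1 * a2)\<^sup>2" by (simp add: power_mult_distrib)
  ultimately have "(2 * (a1 * a2))\<^sup>2 \<le> (s1 * t2 + s2 * t1)\<^sup>2"
    using zero_le_power2[of "s1 * t2 - s2 * t1"] by linarith
  then have "2 * (a1 * a2) \<le> s1 * t2 + s2 * t1"
    by (rule power2_le_imp_le) (use assms in simp)
  then show ?thesis using assms by (simp add: power2_eq_square algebra_simps)
qed

lemma rotated_cone_sum:
  fixes a s t :: "'j \<Rightarrow> real"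
  assumes "finite J" "\<And>j. j \<in> J \<Longrightarrow> (a j)\<^sup>2 \<le> s j * t j \<and> 0 \<le> s j \<and> 0 \<le> t j"
  shows "(sum a J)\<^sup>2 \<le> sum s J * sum t J"
  using assms
proof (induction J rule: finite_induct)
  case (insert j J)
  have "(a j + sum a J)\<^sup>2 \<le> (s j + sum s J) * (t j + sum t J)"
    by (rule rotated_cone_add) (use insert in \<open>auto intro: sum_nonneg\<close>)
  then show ?case using insert by simp
qed simp

lemma rotated_cone_convex_combination:
  fixes K :: nat and a s t :: "nat \<Rightarrow> real"
  assumes c: "\<And>j. j < K \<Longrightarrow> 0 \<le> c j"
    and cone: "\<And>j. j < K \<Longrightarrow> (a j)\<^sup>2 \<le> s j * t j \<and> 0 \<le> s j \<and> 0 \<le> t j"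
  shows "(\<Sum>j<K. c j * a j)\<^sup>2 \<le> (\<Sum>j<K. c j * s j) * (\<Sum>j<K. c j * t j) \<and>
    0 \<le> (\<Sum>j<K. c j * s j) \<and> 0 \<le> (\<Sum>j<K. c j * t j)"
proof -
  have "(c j * a j)\<^sup>2 \<le> c j * s j * (c j * t j)" if "j < K" for j
  proof -
    have "(c j * a j)\<^sup>2 = (c j)\<^sup>2 * (a j)\<^sup>2" by (simp add: power_mult_distrib)
    also have "\<dots> \<le> (c j)\<^sup>2 * (s j * t j)" using cone[OF that] by (intro mult_left_mono) auto
    finally show ?thesis by (simp add: power2_eq_square ac_simps)
  qed
  then have "(\<Sum>j<K. c j * a j)\<^sup>2 \<le> (\<Sum>j<K. c j * s j) * (\<Sum>j<K. c j * t j)"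
    using c cone by (intro rotated_cone_sum[OF finite_lessThan]) auto
  then show ?thesis using c cone by (auto intro!: sum_nonneg)
qed

definition lin_eval :: "'b set \<Rightarrow> nat \<Rightarrow> ('b + nat \<Rightarrow> real) \<Rightarrow> ('b + nat \<Rightarrow> real) \<Rightarrow> real" where
  "lin_eval I m a x = (\<Sum>v\<in>vars I m. a v * x v)"

lemma aff_eval_eq_lin_eval: "aff_eval I m (a, b) x = lin_eval I m a x + b"
  by (simp add: aff_eval_def lin_eval_def)

lemma lin_eval_indicator: "finite I \<Longrightarrow> v \<in> vars I m \<Longrightarrow> lin_eval I m (indicator {v}) x = x v"
  unfolding lin_eval_def indicator_def by (simp add: vars_def if_distrib sum.delta' cong: if_cong)

lemma lin_eval_diff: "lin_eval I m (\<lambda>u. a u - b u) x = lin_eval I m a x - lin_eval I m b x"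
  unfolding lin_eval_def by (simp add: left_diff_distrib sum_subtractf)

lemma lin_eval_uminus: "lin_eval I m (\<lambda>u. - a u) x = - lin_eval I m a x"
  unfolding lin_eval_def by (simp add: sum_negf)

lemma lin_eval_sum: "lin_eval I m (\<lambda>u. \<Sum>j\<in>J. g j u) x = (\<Sum>j\<in>J. lin_eval I m (g j) x)"
  unfolding lin_eval_def by (simp add: sum_distrib_right sum.swap[of _ J])

lemma aff_eval_convex_combination:
  assumes "(\<Sum>j<K. c j) = 1"
  shows "aff_eval I m a (\<lambda>v. \<Sum>j<K. c j * xs j v) = (\<Sum>j<K. c j * aff_eval I m a (xs j))"
proof -
  obtain a1 b where a: "a = (a1, b)" by (cases a)
  have "lin_eval I m a1 (\<lambda>v. \<Sum>j<K. c j * xs j v) = (\<Sum>j<K. c j * lin_eval I m a1 (xs j))"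
    unfolding lin_eval_def by (simp add: sum_distrib_left sum.swap[of _ "{..<K}"] ac_simps)
  then show ?thesis
    using assms unfolding a aff_eval_eq_lin_eval
    by (simp add: distrib_left sum.distrib flip: sum_distrib_right)
qed

text \<open>Only rotated cone constraints with a single term on the left occur in the formulation.\<close>

lemma feasible_convex_combination:
  fixes K :: nat
  assumes no_soc: "soc F = []" and single: "\<And>A s t. (A, s, t) \<in> set (rsoc F) \<Longrightarrow> length A = 1"
    and c: "\<And>j. j < K \<Longrightarrow> 0 \<le> c j" "(\<Sum>j<K. c j) = 1"
    and feasible: "\<And>j. j < K \<Longrightarrow> feasible I F (xs j)"
  shows "feasible I F (\<lambda>v. \<Sum>j<K. c j * xs j v)"
proof -
  let ?ev = "aff_eval I (n_aux F)"
  let ?x = "\<lambda>v. \<Sum>j<K. c j * xs j v"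
  have ev: "?ev a ?x = (\<Sum>j<K. c j * ?ev a (xs j))" for a
    by (rule aff_eval_convex_combination[OF c(2)])
  have lin: "?ev a ?x \<le> 0" if "a \<in> set (lin F)" for a
  proof -
    have "?ev a (xs j) \<le> 0" if "j < K" for j
      using feasible[OF that] \<open>a \<in> set (lin F)\<close> unfolding feasible_def Let_def by blast
    then show ?thesis unfolding ev using c by (auto intro: sum_nonpos mult_nonneg_nonpos)
  qed
  have rsoc: "(?ev a ?x)\<^sup>2 \<le> ?ev s ?x * ?ev t ?x \<and> 0 \<le> ?ev s ?x \<and> 0 \<le> ?ev t ?x"
    if "([a], s, t) \<in> set (rsoc F)" for a s t
    unfolding ev
  proof (rule rotated_cone_convex_combination[OF c(1)])
    show "(?ev a (xs j))\<^sup>2 \<le> ?ev s (xs j) * ?ev t (xs j) \<and> 0 \<le> ?ev s (xs j) \<and> 0 \<le> ?ev t (xs j)"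
      if "j < K" for j
      using feasible[OF that] \<open>([a], s, t) \<in> set (rsoc F)\<close> unfolding feasible_def Let_def by fastforce
  qed
  show ?thesis
    unfolding feasible_def Let_def no_soc
  proof (intro conjI ballI)
    show "?ev a ?x \<le> 0" if "a \<in> set (lin F)" for a using lin that .
  next
    fix Ast assume Ast: "Ast \<in> set (rsoc F)"
    obtain A s t where A: "Ast = (A, s, t)" by (cases Ast)
    have "length A = 1" using single Ast A by simp
    then obtain a where "A = [a]" by (auto simp: length_Suc_conv)
    then show "case Ast of (A, s, t) \<Rightarrow> (\<Sum>a\<leftarrow>A. (?ev a ?x)\<^sup>2) \<le> ?ev s ?x * ?ev t ?x \<and>
        0 \<le> ?ev s ?x \<and> 0 \<le> ?ev t ?x"
      using rsoc Ast A by simp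
  qed simp
qed

definition QP_points :: "'a set \<Rightarrow> 'a set set \<Rightarrow> 'a set \<Rightarrow> 'a set \<Rightarrow> ('a coord \<Rightarrow> real) set" where
  "QP_points V E Lm Lp = {z.
      (\<forall>c. c \<notin> coords V E Lm Lp \<longrightarrow> z c = 0) \<and>
      (\<forall>i\<in>Lp. z (CL i) \<ge> (z (CV i))\<^sup>2) \<and>
      (\<forall>i\<in>Lm. z (CL i) \<le> (z (CV i))\<^sup>2) \<and>
      (\<forall>i j. {i, j} \<in> E \<longrightarrow> z (CE {i, j}) = z (CV i) * z (CV j)) \<and>
      (\<forall>i\<in>V. 0 \<le> z (CV i) \<and> z (CV i) \<le> 1)}"

lemma QP_eq_conv_hull: "QP V E Lm Lp = conv_hull (QP_points V E Lm Lp)"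
  unfolding QP_def QP_points_def by simp

lemma finite_sum_in_conv_hull:
  assumes "finite J" "\<And>j. j \<in> J \<Longrightarrow> 0 \<le> w j \<and> q j \<in> S" "sum w J = 1"
  shows "(\<lambda>c. \<Sum>j\<in>J. w j * q j c) \<in> conv_hull S"
proof -
  obtain h where h: "bij_betw h {..<card J} J"
    using ex_bij_betw_nat_finite[OF \<open>finite J\<close>] by (auto simp: atLeast0LessThan)
  have reindex: "sum g J = (\<Sum>i<card J. g (h i))" for g :: "_ \<Rightarrow> real"
    using sum.reindex_bij_betw[OF h, of g] by simp
  have "\<forall>i<card J. 0 \<le> w (h i) \<and> q (h i) \<in> S"
    using h assms(2) unfolding bij_betw_def by auto
  moreover have "(\<Sum>i<card J. w (h i)) = 1" using assms(3) reindex[of w] by simp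
  ultimately show ?thesis
    unfolding conv_hull_def reindex
    by (intro CollectI exI[of _ "card J"] exI[of _ "\<lambda>i. w (h i)"] exI[of _ "\<lambda>i. q (h i)"]) simp
qed

text \<open>Shift every point of a convex combination for \<open>z0\<close> by \<open>z - z0\<close>: the loop constraints are
  one-sided, so the shifted points stay in the nonconvex set.\<close>

lemma QP_loop_shift:
  assumes z0: "z0 \<in> QP V E Lm Lp" and disj: "Lm \<inter> Lp = {}" and sub: "Lm \<subseteq> V" "Lp \<subseteq> V"
    and shift: "\<And>c. z c \<noteq> z0 c \<Longrightarrow> (\<exists>v\<in>Lp. c = CL v \<and> z0 c \<le> z c) \<or> (\<exists>v\<in>Lm. c = CL v \<and> z c \<le> z0 c)"
  shows "z \<in> QP V E Lm Lp"
proof -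
  obtain K :: nat and c p where cp: "\<forall>i<K. 0 \<le> c i \<and> p i \<in> QP_points V E Lm Lp" "(\<Sum>i<K. c i) = 1"
    and z0_eq: "z0 = (\<lambda>x. \<Sum>i<K. c i * p i x)"
    using z0 unfolding QP_eq_conv_hull conv_hull_def by blast
  define p' where "p' i x = p i x + (z x - z0 x)" for i x
  have "z (CV v) = z0 (CV v)" "z (CE e) = z0 (CE e)" for v e
    using shift[of "CV v"] shift[of "CE e"] by auto
  moreover have "z0 (CL v) \<le> z (CL v)" if "v \<in> Lp" for v
    using shift[of "CL v"] disj that by (cases "z (CL v) = z0 (CL v)") auto
  moreover have "z (CL v) \<le> z0 (CL v)" if "v \<in> Lm" for v
    using shift[of "CL v"] disj that by (cases "z (CL v) = z0 (CL v)") auto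
  moreover have "z c' = z0 c'" if "c' \<notin> coords V E Lm Lp" for c'
    using shift[of c'] sub that unfolding coords_def by (cases "z c' = z0 c'") auto
  ultimately have "p' i \<in> QP_points V E Lm Lp" if "i < K" for i
    using cp that unfolding QP_points_def p'_def by auto (smt (verit))+
  moreover have "z = (\<lambda>x. \<Sum>i<K. c i * p' i x)"
  proof
    fix x
    have "(\<Sum>i<K. c i * p' i x) = (\<Sum>i<K. c i * p i x) + (\<Sum>i<K. c i) * (z x - z0 x)"
      unfolding p'_def by (simp add: distrib_left sum.distrib sum_distrib_right)
    then show "z x = (\<Sum>i<K. c i * p' i x)" using cp(2) z0_eq by simp
  qed
  ultimately show ?thesis
    using cp unfolding QP_eq_conv_hull conv_hull_def by blast
qed

section \<open>Conditional probabilities of a node given its two neighbours\<close>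

definition cond_prob :: "'v set \<Rightarrow> ('v set \<Rightarrow> real) \<Rightarrow> 'v \<Rightarrow> 'v \<Rightarrow> 'v \<Rightarrow> 'v set \<Rightarrow> real" where
  "cond_prob U D p u w T = marginal U D {u, p, w} (insert p T) / marginal U D {u, w} T"

lemma cond_prob_sym: "cond_prob U D p u w = cond_prob U D p w u"
  unfolding cond_prob_def by (simp add: insert_commute)

lemma sum_indicator_subset:
  assumes "finite U" "C \<subseteq> U"
  shows "(\<Sum>A\<in>Pow U. D A * (if C \<subseteq> A then 1 else 0)) = marginal U D C C"
proof -
  have "(\<Sum>A\<in>Pow U. D A * (if C \<subseteq> A then 1 else 0)) = (\<Sum>A\<in>Pow U. if C \<subseteq> A then D A else 0)"
    by (rule sum.cong) auto
  also have "\<dots> = sum D {A \<in> Pow U. C \<subseteq> A}"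
    by (rule sum.inter_filter[symmetric]) (use assms in auto)
  also have "\<dots> = marginal U D C C" unfolding marginal_def by (rule sum.cong) auto
  finally show ?thesis .
qed

context
  fixes U :: "'v set" and D :: "'v set \<Rightarrow> real" and p u w :: 'v
  assumes fU: "finite U" and nonneg: "\<And>A. A \<subseteq> U \<Longrightarrow> 0 \<le> D A"
    and distinct: "p \<noteq> u" "p \<noteq> w" "u \<noteq> w"
begin

lemma marginal_pair_split:
  "T \<subseteq> {u, w} \<Longrightarrow> marginal U D {u, w} T = marginal U D {u, p, w} (insert p T) + marginal U D {u, p, w} T"
  using marginal_insert_split[OF fU, of p "{u, w}" T] distinct by (simp add: insert_commute)

lemma marginal_insert_bounds:
  "T \<subseteq> {u, w} \<Longrightarrow> 0 \<le> marginal U D {u, p, w} (insert p T) \<and> marginal U D {u, p, w} (insert p T) \<le> marginal U D {u, w} T"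
  using marginal_pair_split[of T] marginal_nonneg[of U D, OF nonneg] by (metis le_add_same_cancel1)

lemma cond_prob_bounds: "T \<subseteq> {u, w} \<Longrightarrow> 0 \<le> cond_prob U D p u w T \<and> cond_prob U D p u w T \<le> 1"
  using marginal_insert_bounds[of T] unfolding cond_prob_def
  by (auto intro: divide_nonneg_nonneg simp: divide_le_eq_1)

lemma marginal_mult_cond_prob:
  "T \<subseteq> {u, w} \<Longrightarrow> marginal U D {u, w} T * cond_prob U D p u w T = marginal U D {u, p, w} (insert p T)"
  using marginal_insert_bounds[of T] unfolding cond_prob_def by (cases "marginal U D {u, w} T = 0") auto

lemma sum_marginal_insert:
  "sum (\<lambda>T. marginal U D {u, p, w} (insert p T)) {T. T \<subseteq> {u, w} \<and> Q T}
   = sum (marginal U D {u, p, w}) {T. T \<subseteq> {u, p, w} \<and> p \<in> T \<and> Q (T - {p})}"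
proof -
  have "T \<subseteq> {u, w} \<Longrightarrow> T - {p} = T" for T using distinct by auto
  then show ?thesis
    by (intro sum.reindex_bij_witness[where j="insert p" and i="\<lambda>T. T - {p}"]) (use distinct in auto)
qed

lemma sum_cond_prob: "(\<Sum>A\<in>Pow U. D A * cond_prob U D p u w (A \<inter> {u, w})) = marginal U D {p} {p}"
proof -
  have "(\<Sum>A\<in>Pow U. D A * cond_prob U D p u w (A \<inter> {u, w}))
      = (\<Sum>T\<in>Pow {u, w}. marginal U D {u, w} T * cond_prob U D p u w T)"
    by (rule sum_Pow_marginal) (use fU in auto)
  also have "\<dots> = (\<Sum>T\<in>{T. T \<subseteq> {u, w} \<and> True}. marginal U D {u, p, w} (insert p T))"
    by (rule sum.cong) (auto simp: marginal_mult_cond_prob)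
  also have "\<dots> = sum (marginal U D {u, p, w}) {T. T \<subseteq> {u, p, w} \<and> T \<inter> {p} = {p}}"
    unfolding sum_marginal_insert by (rule sum.cong) auto
  also have "\<dots> = marginal U D {p} {p}"
    by (rule marginal_coarsen[symmetric]) (use fU in auto)
  finally show ?thesis .
qed

lemma sum_cond_prob_indicator:
  "(\<Sum>A\<in>Pow U. D A * (cond_prob U D p u w (A \<inter> {u, w}) * (if u \<in> A then 1 else 0))) = marginal U D {u, p} {u, p}"
proof -
  have "(\<Sum>A\<in>Pow U. D A * (cond_prob U D p u w (A \<inter> {u, w}) * (if u \<in> A then 1 else 0)))
      = (\<Sum>A\<in>Pow U. D A * (\<lambda>T. cond_prob U D p u w T * (if u \<in> T then 1 else 0)) (A \<inter> {u, w}))"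
    by (rule sum.cong) auto
  also have "\<dots> = (\<Sum>T\<in>Pow {u, w}. marginal U D {u, w} T * (cond_prob U D p u w T * (if u \<in> T then 1 else 0)))"
    by (rule sum_Pow_marginal) (use fU in auto)
  also have "\<dots> = (\<Sum>T\<in>Pow {u, w}. if u \<in> T then marginal U D {u, p, w} (insert p T) else 0)"
    by (rule sum.cong) (auto simp: marginal_mult_cond_prob[symmetric])
  also have "\<dots> = (\<Sum>T\<in>{T. T \<subseteq> {u, w} \<and> u \<in> T}. marginal U D {u, p, w} (insert p T))"
    by (subst sum.inter_filter[symmetric]) (auto intro: sum.cong)
  also have "\<dots> = sum (marginal U D {u, p, w}) {T. T \<subseteq> {u, p, w} \<and> T \<inter> {u, p} = {u, p}}"
    unfolding sum_marginal_insert by (rule sum.cong) (use distinct in auto)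
  also have "\<dots> = marginal U D {u, p} {u, p}"
    by (rule marginal_coarsen[symmetric]) (use fU in auto)
  finally show ?thesis .
qed

lemma sum_cond_prob_square:
  "(\<Sum>A\<in>Pow U. D A * (cond_prob U D p u w (A \<inter> {u, w}))\<^sup>2)
   = (\<Sum>T\<in>Pow {u, w}. (marginal U D {u, p, w} (insert p T))\<^sup>2 / marginal U D {u, w} T)"
proof -
  have "(\<Sum>A\<in>Pow U. D A * (cond_prob U D p u w (A \<inter> {u, w}))\<^sup>2)
      = (\<Sum>T\<in>Pow {u, w}. marginal U D {u, w} T * (cond_prob U D p u w T)\<^sup>2)"
    using sum_Pow_marginal[OF fU, of "{u, w}" D "\<lambda>T. (cond_prob U D p u w T)\<^sup>2"] by simp
  also have "\<dots> = (\<Sum>T\<in>Pow {u, w}. (marginal U D {u, p, w} (insert p T))\<^sup>2 / marginal U D {u, w} T)"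
    by (rule sum.cong) (auto simp: cond_prob_def power2_eq_square)
  finally show ?thesis .
qed

end

section \<open>A path decomposition of the cycle\<close>

definition cyc_succ :: "nat \<Rightarrow> nat \<Rightarrow> nat" where
  "cyc_succ n i = Suc i mod n"

definition cyc_pred :: "nat \<Rightarrow> nat \<Rightarrow> nat" where
  "cyc_pred n i = (i + n - 1) mod n"

text \<open>For \<open>k < n - 2\<close>, the bags \<open>fan_bag n k\<close> form a path decomposition of the cycle
  \<open>0, \<dots>, n - 1\<close> in which every node occurs together with both of its neighbours.\<close>

definition fan_bag :: "nat \<Rightarrow> nat \<Rightarrow> nat set" where
  "fan_bag n k = {0, n - 1, k, Suc k, Suc (Suc k)}"

lemma cyc_succ_lt: "i < n \<Longrightarrow> cyc_succ n i < n"
  unfolding cyc_succ_def by simp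

lemma cyc_pred_lt: "i < n \<Longrightarrow> cyc_pred n i < n"
  unfolding cyc_pred_def by simp

lemma cyc_pred_succ: "i < n \<Longrightarrow> cyc_pred n (cyc_succ n i) = i"
  unfolding cyc_pred_def cyc_succ_def by (cases "Suc i = n") (auto simp: mod_if)

lemma cyc_succ_pred: "i < n \<Longrightarrow> cyc_succ n (cyc_pred n i) = i"
  unfolding cyc_pred_def cyc_succ_def by (cases "i = 0") (auto simp: mod_if)

lemma cyc_neighbours_distinct:
  assumes "3 \<le> n" "i < n"
  shows "i \<noteq> cyc_succ n i" "i \<noteq> cyc_pred n i" "cyc_pred n i \<noteq> cyc_succ n i"
  using assms unfolding cyc_pred_def cyc_succ_def by (auto simp: mod_if)

lemma finite_fan_bag: "finite (fan_bag n k)"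
  unfolding fan_bag_def by simp

lemma fan_bag_subset: "k < n - 2 \<Longrightarrow> fan_bag n k \<subseteq> {..<n}"
  unfolding fan_bag_def by auto

lemma fan_bag_lt: "k < n - 2 \<Longrightarrow> i \<in> fan_bag n k \<Longrightarrow> i < n"
  using fan_bag_subset by blast

lemma card_fan_bag: "card (fan_bag n k) \<le> 5"
  using card_length[of "[0, n - 1, k, Suc k, Suc (Suc k)]"] unfolding fan_bag_def by simp

lemma node_in_fan_bag: "3 \<le> n \<Longrightarrow> i < n \<Longrightarrow> \<exists>k<n-2. i \<in> fan_bag n k"
proof (cases "i \<le> n - 3")
  case False
  moreover assume "3 \<le> n" "i < n"
  ultimately show ?thesis by (intro exI[of _ "n - 3"]) (auto simp: fan_bag_def)
qed (auto simp: fan_bag_def intro!: exI[of _ i])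

lemma edge_in_fan_bag: "3 \<le> n \<Longrightarrow> i < n \<Longrightarrow> \<exists>k<n-2. i \<in> fan_bag n k \<and> cyc_succ n i \<in> fan_bag n k"
proof -
  assume n3: "3 \<le> n" and i: "i < n"
  consider "i \<le> n - 3" | "i = n - 2" | "i = n - 1" using i by linarith
  then show ?thesis
  proof cases
    case 1
    then have "cyc_succ n i = Suc i" unfolding cyc_succ_def using n3 by simp
    then show ?thesis using n3 1 by (intro exI[of _ i]) (simp add: fan_bag_def)
  next
    case 2
    then have "cyc_succ n i = n - 1" unfolding cyc_succ_def using n3 by simp
    moreover have "n - 2 = Suc (n - 3)" "n - 1 = Suc (Suc (n - 3))" using n3 by arith+
    ultimately show ?thesis using n3 2 by (intro exI[of _ "n - 3"]) (simp add: fan_bag_def)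
  next
    case 3
    then have "cyc_succ n i = 0" unfolding cyc_succ_def using n3 by simp
    then show ?thesis using n3 3 by (intro exI[of _ "n - 3"]) (simp add: fan_bag_def)
  qed
qed

lemma neighbourhood_in_fan_bag:
  "3 \<le> n \<Longrightarrow> p < n \<Longrightarrow> \<exists>k<n-2. {cyc_pred n p, p, cyc_succ n p} \<subseteq> fan_bag n k"
proof -
  assume n3: "3 \<le> n" and p: "p < n"
  consider "p = 0" | "0 < p \<and> p \<le> n - 2" | "p = n - 1" using p by linarith
  then show ?thesis
  proof cases
    case 1
    then have "cyc_pred n p = n - 1" "cyc_succ n p = 1" unfolding cyc_pred_def cyc_succ_def using n3 by auto
    then show ?thesis using n3 1 by (intro exI[of _ 0]) (simp add: fan_bag_def)
  next
    case 2
    have "p + n - 1 = (p - 1) + n" using 2 by arith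
    then have "cyc_pred n p = (p - 1) mod n" unfolding cyc_pred_def by simp
    also have "\<dots> = p - 1" using 2 n3 by (intro mod_less) arith
    finally have "cyc_pred n p = p - 1" .
    moreover have "cyc_succ n p = Suc p" unfolding cyc_succ_def using n3 2 by auto
    ultimately show ?thesis using n3 2 by (intro exI[of _ "p - 1"]) (simp add: fan_bag_def, arith)
  next
    case 3
    have "p + n - 1 = (n - 2) + n" using 3 n3 by arith
    then have "cyc_pred n p = (n - 2) mod n" unfolding cyc_pred_def by (metis mod_add_self2)
    also have "\<dots> = n - 2" using n3 by (intro mod_less) arith
    finally have "cyc_pred n p = n - 2" .
    moreover have "cyc_succ n p = 0" unfolding cyc_succ_def using n3 3 by auto
    moreover have "n - 2 = Suc (n - 3)" "n - 1 = Suc (Suc (n - 3))" using n3 by arith+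
    ultimately show ?thesis using n3 3 by (intro exI[of _ "n - 3"]) (simp add: fan_bag_def)
  qed
qed

lemma fan_bag_running_intersection:
  "fan_bag n (Suc k) \<inter> (\<Union>j\<le>k. fan_bag n j) \<subseteq> fan_bag n k"
proof
  fix x assume "x \<in> fan_bag n (Suc k) \<inter> (\<Union>j\<le>k. fan_bag n j)"
  then obtain j where "j \<le> k" "x \<in> fan_bag n j" "x \<in> fan_bag n (Suc k)" by auto
  then have "x = 0 \<or> x = n - 1 \<or> x = k \<or> x = Suc k \<or> x = Suc (Suc k)"
    unfolding fan_bag_def by auto
  then show "x \<in> fan_bag n k" unfolding fan_bag_def by auto
qed

lemma Union_fan_bag: "3 \<le> n \<Longrightarrow> (\<Union>j<n-2. fan_bag n j) = {..<n}"
  using fan_bag_subset node_in_fan_bag by fastforce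

section \<open>The lifted formulation\<close>

abbreviation cyc_nbrs :: "nat \<Rightarrow> nat \<Rightarrow> nat set" where
  "cyc_nbrs n p \<equiv> {cyc_pred n p, cyc_succ n p}"

text \<open>Auxiliary variables: \<open>Moment k T\<close> is the probability \<open>\<mu>\<^sub>k(T)\<close> that the random subset of
  \<open>fan_bag n k\<close> equals \<open>T\<close>; \<open>Cone p T\<close> is the variable \<open>w\<^sub>p(T)\<close> of a plus-loop node \<open>p\<close>, an
  upper bound for \<open>Pr[p \<in> A, A \<inter> N(p) = T]\<^sup>2 / Pr[A \<inter> N(p) = T]\<close>.\<close>

datatype aux_label = Moment nat "nat set" | Cone nat "nat set"

definition aux_labels :: "nat \<Rightarrow> nat set \<Rightarrow> aux_label set" where
  "aux_labels n P = {Moment k T | k T. k < n - 2 \<and> T \<subseteq> fan_bag n k} \<union> {Cone p T | p T. p \<in> P \<and> T \<subseteq> cyc_nbrs n p}"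

lemma aux_labels_eq:
  "aux_labels n P = (\<lambda>(k, T). Moment k T) ` (SIGMA k:{..<n-2}. Pow (fan_bag n k))
     \<union> (\<lambda>(p, T). Cone p T) ` (SIGMA p:P. Pow (cyc_nbrs n p))"
  unfolding aux_labels_def by auto

lemma finite_aux_labels: "finite P \<Longrightarrow> finite (aux_labels n P)"
  unfolding aux_labels_eq by (auto simp: finite_fan_bag)

definition list_of :: "'x set \<Rightarrow> 'x list" where
  "list_of X = (SOME xs. set xs = X \<and> distinct xs)"

lemma set_length_list_of: "finite X \<Longrightarrow> set (list_of X) = X \<and> length (list_of X) = card X"
  unfolding list_of_def
  by (metis (mono_tags, lifting) distinct_card finite_distinct_list someI_ex)

definition equality_cons :: "('v \<Rightarrow> real) \<Rightarrow> real \<Rightarrow> 'v affine set" where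
  "equality_cons a b = {(a, b), (\<lambda>u. - a u, - b)}"

lemma finite_equality_cons: "finite (equality_cons a b)"
  by (simp add: equality_cons_def)

lemma card_equality_cons: "card (equality_cons a b) \<le> 2"
  unfolding equality_cons_def by (simp add: card_insert_le_m1)

locale cycle_formulation =
  fixes V :: "'a set" and E :: "'a set set" and Lm Lp :: "'a set" and n :: nat and f :: "nat \<Rightarrow> 'a"
    and idx :: "aux_label \<Rightarrow> nat"
  assumes n3: "3 \<le> n" and f_bij: "bij_betw f {..<n} V"
    and E_eq: "E = {{f i, f ((i + 1) mod n)} | i. i < n}"
    and Lm_subset: "Lm \<subseteq> V" and Lp_subset: "Lp \<subseteq> V" and Lm_Lp_disjoint: "Lm \<inter> Lp = {}"
    and Lp_stable: "stable_set E Lp"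
    and idx_bij: "bij_betw idx (aux_labels n {i. i < n \<and> f i \<in> Lp})
      {..<card (aux_labels n {i. i < n \<and> f i \<in> Lp})}"
begin

definition plus_pos :: "nat set" where "plus_pos = {i. i < n \<and> f i \<in> Lp}"
definition minus_pos :: "nat set" where "minus_pos = {i. i < n \<and> f i \<in> Lm}"
definition I :: "'a coord set" where "I = coords V E Lm Lp"
definition num_aux :: nat where "num_aux = card (aux_labels n plus_pos)"

definition mu_var :: "nat \<Rightarrow> nat set \<Rightarrow> 'a coord + nat" where "mu_var k T = Inr (idx (Moment k T))"
definition w_var :: "nat \<Rightarrow> nat set \<Rightarrow> 'a coord + nat" where "w_var p T = Inr (idx (Cone p T))"
definition node_var :: "nat \<Rightarrow> 'a coord + nat" where "node_var i = Inl (CV (f i))"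
definition edge_var :: "nat \<Rightarrow> 'a coord + nat" where "edge_var i = Inl (CE {f i, f (cyc_succ n i)})"
definition loop_var :: "nat \<Rightarrow> 'a coord + nat" where "loop_var i = Inl (CL (f i))"

definition marginal_form :: "nat \<Rightarrow> nat set \<Rightarrow> nat set \<Rightarrow> 'a coord + nat \<Rightarrow> real" where
  "marginal_form k C T = (\<lambda>u. \<Sum>T'\<in>{T'. T' \<subseteq> fan_bag n k \<and> T' \<inter> C = T}. indicator {mu_var k T'} u)"

abbreviation (input) "mu x k \<equiv> \<lambda>T. x (mu_var k T)"

definition nonneg_cons :: "('a coord + nat) affine set" where
  "nonneg_cons = (\<lambda>(k, T). (\<lambda>u. - indicator {mu_var k T} u, 0::real)) ` (SIGMA k:{..<n-2}. Pow (fan_bag n k))"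
definition normalization_cons :: "('a coord + nat) affine set" where
  "normalization_cons = (\<Union>k<n-2. equality_cons (marginal_form k {} {}) (-1))"
definition consistency_cons :: "('a coord + nat) affine set" where
  "consistency_cons = (\<Union>(k, T) \<in> (SIGMA k:{k. Suc k < n - 2}. Pow (fan_bag n k \<inter> fan_bag n (Suc k))).
   equality_cons (\<lambda>u. marginal_form k (fan_bag n k \<inter> fan_bag n (Suc k)) T u
     - marginal_form (Suc k) (fan_bag n k \<inter> fan_bag n (Suc k)) T u) 0)"
definition node_cons :: "('a coord + nat) affine set" where
  "node_cons = (\<Union>(k, i) \<in> (SIGMA k:{..<n-2}. fan_bag n k).
   equality_cons (\<lambda>u. indicator {node_var i} u - marginal_form k {i} {i} u) 0)"
definition edge_cons :: "('a coord + nat) affine set" where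
  "edge_cons = (\<Union>(k, i) \<in> (SIGMA k:{..<n-2}. {i. i < n \<and> i \<in> fan_bag n k \<and> cyc_succ n i \<in> fan_bag n k}).
   equality_cons (\<lambda>u. indicator {edge_var i} u - marginal_form k {i, cyc_succ n i} {i, cyc_succ n i} u) 0)"
definition minus_loop_cons :: "('a coord + nat) affine set" where
  "minus_loop_cons = (\<lambda>(k, i). (\<lambda>u. indicator {loop_var i} u - marginal_form k {i} {i} u, 0::real))
   ` (SIGMA k:{..<n-2}. fan_bag n k \<inter> minus_pos)"
definition plus_loop_cons :: "('a coord + nat) affine set" where
  "plus_loop_cons = (\<lambda>p. (\<lambda>u. (\<Sum>T\<in>Pow (cyc_nbrs n p). indicator {w_var p T} u) - indicator {loop_var p} u, 0::real))
   ` plus_pos"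
definition cone_cons :: "(('a coord + nat) affine list \<times> ('a coord + nat) affine \<times> ('a coord + nat) affine) set" where
  "cone_cons = (\<lambda>(p, k, T). ([(marginal_form k {cyc_pred n p, p, cyc_succ n p} (insert p T), 0::real)],
     (indicator {w_var p T}, 0::real), (marginal_form k (cyc_nbrs n p) T, 0::real)))
   ` (SIGMA p:plus_pos. SIGMA k:{k. k < n - 2 \<and> {cyc_pred n p, p, cyc_succ n p} \<subseteq> fan_bag n k}. Pow (cyc_nbrs n p))"

definition lin_cons :: "('a coord + nat) affine set" where
  "lin_cons = nonneg_cons \<union> normalization_cons \<union> consistency_cons \<union> node_cons \<union> edge_cons
   \<union> minus_loop_cons \<union> plus_loop_cons"

definition formulation :: "('a coord + nat) soc_formulation" where
  "formulation = \<lparr>n_aux = num_aux, lin = list_of lin_cons, soc = [], rsoc = list_of cone_cons\<rparr>"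

lemma finite_plus_pos: "finite plus_pos"
  unfolding plus_pos_def by simp

lemma plus_pos_lt: "p \<in> plus_pos \<Longrightarrow> p < n"
  unfolding plus_pos_def by simp

lemma minus_pos_lt: "i \<in> minus_pos \<Longrightarrow> i < n"
  unfolding minus_pos_def by simp

lemma plus_minus_disjoint: "plus_pos \<inter> minus_pos = {}"
  unfolding plus_pos_def minus_pos_def using Lm_Lp_disjoint by auto

lemma finite_V: "finite V"
  using f_bij bij_betw_finite by blast

lemma f_in_V: "i < n \<Longrightarrow> f i \<in> V"
  using f_bij unfolding bij_betw_def by auto

lemma edge_in_E: "i < n \<Longrightarrow> {f i, f (cyc_succ n i)} \<in> E"
  unfolding E_eq cyc_succ_def by auto

lemma E_cases: "e \<in> E \<Longrightarrow> \<exists>i<n. e = {f i, f (cyc_succ n i)}"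
  unfolding E_eq cyc_succ_def by auto

lemma finite_I: "finite I"
proof -
  have "finite (Lm \<union> Lp)" using finite_V Lm_subset Lp_subset by (meson finite_Un rev_finite_subset)
  moreover have "finite E" unfolding E_eq by simp
  ultimately show ?thesis unfolding I_def coords_def using finite_V by simp
qed

lemma idx_lt: "l \<in> aux_labels n plus_pos \<Longrightarrow> idx l < num_aux"
  using idx_bij unfolding plus_pos_def num_aux_def bij_betw_def by auto

lemma mu_var_in_vars: "k < n - 2 \<Longrightarrow> T \<subseteq> fan_bag n k \<Longrightarrow> mu_var k T \<in> vars I num_aux"
  unfolding mu_var_def vars_def using idx_lt[of "Moment k T"] unfolding aux_labels_def by auto

lemma w_var_in_vars: "p \<in> plus_pos \<Longrightarrow> T \<subseteq> cyc_nbrs n p \<Longrightarrow> w_var p T \<in> vars I num_aux"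
  unfolding w_var_def vars_def using idx_lt[of "Cone p T"] unfolding aux_labels_def by auto

lemma node_var_in_vars: "i < n \<Longrightarrow> node_var i \<in> vars I num_aux"
  unfolding node_var_def vars_def I_def coords_def using f_in_V by auto

lemma edge_var_in_vars: "i < n \<Longrightarrow> edge_var i \<in> vars I num_aux"
  unfolding edge_var_def vars_def I_def coords_def using edge_in_E by auto

lemma loop_var_in_vars: "i \<in> plus_pos \<union> minus_pos \<Longrightarrow> loop_var i \<in> vars I num_aux"
  unfolding loop_var_def vars_def I_def coords_def plus_pos_def minus_pos_def by auto

lemma lin_eval_marginal_form:
  "k < n - 2 \<Longrightarrow> lin_eval I num_aux (marginal_form k C T) x = marginal (fan_bag n k) (mu x k) C T"
  unfolding marginal_form_def lin_eval_sum marginal_def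
  by (rule sum.cong[OF refl]) (use lin_eval_indicator[OF finite_I] mu_var_in_vars in auto)

lemma equality_cons_iff:
  "(\<forall>a\<in>equality_cons a b. aff_eval I num_aux a x \<le> 0) \<longleftrightarrow> lin_eval I num_aux a x + b = 0"
  unfolding equality_cons_def by (auto simp: aff_eval_eq_lin_eval lin_eval_uminus)

lemmas eval_simps = aff_eval_eq_lin_eval lin_eval_uminus lin_eval_diff equality_cons_iff
  lin_eval_marginal_form lin_eval_indicator[OF finite_I]

definition moment_conditions :: "('a coord + nat \<Rightarrow> real) \<Rightarrow> bool" where
  "moment_conditions x \<longleftrightarrow>
  (\<forall>k<n-2. \<forall>T\<subseteq>fan_bag n k. 0 \<le> mu x k T) \<and>
  (\<forall>k<n-2. marginal (fan_bag n k) (mu x k) {} {} = 1) \<and>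
  (\<forall>k. Suc k < n-2 \<longrightarrow> (\<forall>T\<subseteq>fan_bag n k \<inter> fan_bag n (Suc k).
     marginal (fan_bag n k) (mu x k) (fan_bag n k \<inter> fan_bag n (Suc k)) T =
     marginal (fan_bag n (Suc k)) (mu x (Suc k)) (fan_bag n k \<inter> fan_bag n (Suc k)) T)) \<and>
  (\<forall>k<n-2. \<forall>i\<in>fan_bag n k. x (node_var i) = marginal (fan_bag n k) (mu x k) {i} {i}) \<and>
  (\<forall>k<n-2. \<forall>i<n. i \<in> fan_bag n k \<longrightarrow> cyc_succ n i \<in> fan_bag n k \<longrightarrow>
     x (edge_var i) = marginal (fan_bag n k) (mu x k) {i, cyc_succ n i} {i, cyc_succ n i}) \<and>
  (\<forall>k<n-2. \<forall>i\<in>fan_bag n k. i \<in> minus_pos \<longrightarrow> x (loop_var i) \<le> marginal (fan_bag n k) (mu x k) {i} {i}) \<and>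
  (\<forall>p\<in>plus_pos. (\<Sum>T\<in>Pow (cyc_nbrs n p). x (w_var p T)) \<le> x (loop_var p)) \<and>
  (\<forall>p\<in>plus_pos. \<forall>k<n-2. {cyc_pred n p, p, cyc_succ n p} \<subseteq> fan_bag n k \<longrightarrow> (\<forall>T\<subseteq>cyc_nbrs n p.
      (marginal (fan_bag n k) (mu x k) {cyc_pred n p, p, cyc_succ n p} (insert p T))\<^sup>2
         \<le> x (w_var p T) * marginal (fan_bag n k) (mu x k) (cyc_nbrs n p) T \<and>
      0 \<le> x (w_var p T) \<and> 0 \<le> marginal (fan_bag n k) (mu x k) (cyc_nbrs n p) T))"

abbreviation "lin_feasible L x \<equiv> \<forall>a\<in>L. aff_eval I num_aux a x \<le> 0"

lemma nonneg_cons_iff: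
  "lin_feasible nonneg_cons x \<longleftrightarrow> (\<forall>k<n-2. \<forall>T\<subseteq>fan_bag n k. 0 \<le> mu x k T)"
  unfolding nonneg_cons_def by (auto simp: eval_simps mu_var_in_vars)

lemma normalization_cons_iff:
  "lin_feasible normalization_cons x \<longleftrightarrow> (\<forall>k<n-2. marginal (fan_bag n k) (mu x k) {} {} = 1)"
  unfolding normalization_cons_def by (auto simp: eval_simps)

lemma consistency_cons_iff:
  "lin_feasible consistency_cons x \<longleftrightarrow> (\<forall>k. Suc k < n-2 \<longrightarrow> (\<forall>T\<subseteq>fan_bag n k \<inter> fan_bag n (Suc k).
     marginal (fan_bag n k) (mu x k) (fan_bag n k \<inter> fan_bag n (Suc k)) T =
     marginal (fan_bag n (Suc k)) (mu x (Suc k)) (fan_bag n k \<inter> fan_bag n (Suc k)) T))"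
  unfolding consistency_cons_def by (auto simp: eval_simps)

lemma node_cons_iff:
  "lin_feasible node_cons x \<longleftrightarrow>
    (\<forall>k<n-2. \<forall>i\<in>fan_bag n k. x (node_var i) = marginal (fan_bag n k) (mu x k) {i} {i})"
  unfolding node_cons_def by (auto simp: eval_simps node_var_in_vars fan_bag_lt)

lemma edge_cons_iff:
  "lin_feasible edge_cons x \<longleftrightarrow> (\<forall>k<n-2. \<forall>i<n. i \<in> fan_bag n k \<longrightarrow> cyc_succ n i \<in> fan_bag n k \<longrightarrow>
     x (edge_var i) = marginal (fan_bag n k) (mu x k) {i, cyc_succ n i} {i, cyc_succ n i})"
  unfolding edge_cons_def by (auto simp: eval_simps edge_var_in_vars)

lemma minus_loop_cons_iff:
  "lin_feasible minus_loop_cons x \<longleftrightarrow> (\<forall>k<n-2. \<forall>i\<in>fan_bag n k. i \<in> minus_pos \<longrightarrow>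
     x (loop_var i) \<le> marginal (fan_bag n k) (mu x k) {i} {i})"
  unfolding minus_loop_cons_def by (auto simp: eval_simps loop_var_in_vars)

lemma plus_loop_cons_iff:
  "lin_feasible plus_loop_cons x \<longleftrightarrow> (\<forall>p\<in>plus_pos. (\<Sum>T\<in>Pow (cyc_nbrs n p). x (w_var p T)) \<le> x (loop_var p))"
proof -
  have "lin_eval I num_aux (\<lambda>u. \<Sum>T\<in>Pow (cyc_nbrs n p). indicator {w_var p T} u) x
      = (\<Sum>T\<in>Pow (cyc_nbrs n p). x (w_var p T))" if "p \<in> plus_pos" for p
    unfolding lin_eval_sum
    by (rule sum.cong[OF refl]) (use lin_eval_indicator[OF finite_I] w_var_in_vars that in auto)
  then show ?thesis unfolding plus_loop_cons_def by (auto simp: eval_simps loop_var_in_vars)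
qed

lemma cone_cons_iff:
  "(\<forall>(A, s, t) \<in> cone_cons. (\<Sum>a\<leftarrow>A. (aff_eval I num_aux a x)\<^sup>2) \<le> aff_eval I num_aux s x * aff_eval I num_aux t x \<and>
     0 \<le> aff_eval I num_aux s x \<and> 0 \<le> aff_eval I num_aux t x) \<longleftrightarrow>
   (\<forall>p\<in>plus_pos. \<forall>k<n-2. {cyc_pred n p, p, cyc_succ n p} \<subseteq> fan_bag n k \<longrightarrow> (\<forall>T\<subseteq>cyc_nbrs n p.
      (marginal (fan_bag n k) (mu x k) {cyc_pred n p, p, cyc_succ n p} (insert p T))\<^sup>2
         \<le> x (w_var p T) * marginal (fan_bag n k) (mu x k) (cyc_nbrs n p) T \<and>
      0 \<le> x (w_var p T) \<and> 0 \<le> marginal (fan_bag n k) (mu x k) (cyc_nbrs n p) T))"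
  unfolding cone_cons_def by (auto simp: eval_simps w_var_in_vars)

lemma finite_lin_cons: "finite lin_cons"
proof -
  have "finite {k. Suc k < n - 2}" by (rule finite_subset[of _ "{..<n}"]) auto
  then show ?thesis
    unfolding lin_cons_def nonneg_cons_def normalization_cons_def consistency_cons_def node_cons_def
      edge_cons_def minus_loop_cons_def plus_loop_cons_def
    by (intro finite_UnI finite_imageI finite_UN_I finite_SigmaI)
      (auto simp: finite_fan_bag finite_equality_cons finite_plus_pos)
qed

lemma finite_cone_cons: "finite cone_cons"
  unfolding cone_cons_def by (intro finite_imageI finite_SigmaI) (auto simp: finite_plus_pos)

lemma formulation_simps:
  "n_aux formulation = num_aux" "set (lin formulation) = lin_cons" "soc formulation = []"
  "set (rsoc formulation) = cone_cons"
  "length (lin formulation) = card lin_cons" "length (rsoc formulation) = card cone_cons"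
  using set_length_list_of[OF finite_lin_cons] set_length_list_of[OF finite_cone_cons] unfolding formulation_def
  by auto

lemma feasible_iff_moment_conditions: "feasible I formulation x \<longleftrightarrow> moment_conditions x"
  unfolding feasible_def Let_def formulation_simps lin_cons_def ball_Un moment_conditions_def
    nonneg_cons_iff normalization_cons_iff consistency_cons_iff node_cons_iff edge_cons_iff
    minus_loop_cons_iff plus_loop_cons_iff cone_cons_iff
  by simp

subsection \<open>Every point of QP(G) lifts to a feasible point\<close>

definition node_val :: "('a coord \<Rightarrow> real) \<Rightarrow> nat \<Rightarrow> real" where
  "node_val z i = z (CV (f i))"

text \<open>A point \<open>z\<close> of the nonconvex set lifts via the random subset that contains each node \<open>i\<close>
  independently with probability \<open>z\<^sub>i\<close>, and \<open>w\<^sub>p(T) = Pr[A \<inter> N(p) = T] z\<^sub>p\<^sup>2\<close>.\<close>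

definition lift :: "('a coord \<Rightarrow> real) \<Rightarrow> 'a coord + nat \<Rightarrow> real" where
  "lift z v = (case v of Inl c \<Rightarrow> z c | Inr j \<Rightarrow>
     (case the_inv_into (aux_labels n plus_pos) idx j of
        Moment k T \<Rightarrow> indep_prob (fan_bag n k) (node_val z) T
      | Cone p T \<Rightarrow> indep_prob (cyc_nbrs n p) (node_val z) T * (node_val z p)\<^sup>2))"

lemma lift_Inl [simp]: "lift z (Inl c) = z c"
  unfolding lift_def by simp

lemma inj_idx: "inj_on idx (aux_labels n plus_pos)"
  using idx_bij unfolding plus_pos_def bij_betw_def by simp

lemma lift_mu_var: "k < n - 2 \<Longrightarrow> T \<subseteq> fan_bag n k \<Longrightarrow> lift z (mu_var k T) = indep_prob (fan_bag n k) (node_val z) T"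
proof -
  assume "k < n - 2" "T \<subseteq> fan_bag n k"
  then have "the_inv_into (aux_labels n plus_pos) idx (idx (Moment k T)) = Moment k T"
    by (intro the_inv_into_f_f[OF inj_idx]) (auto simp: aux_labels_def)
  then show ?thesis unfolding lift_def mu_var_def by simp
qed

lemma lift_w_var:
  "p \<in> plus_pos \<Longrightarrow> T \<subseteq> cyc_nbrs n p \<Longrightarrow> lift z (w_var p T) = indep_prob (cyc_nbrs n p) (node_val z) T * (node_val z p)\<^sup>2"
proof -
  assume "p \<in> plus_pos" "T \<subseteq> cyc_nbrs n p"
  then have "the_inv_into (aux_labels n plus_pos) idx (idx (Cone p T)) = Cone p T"
    by (intro the_inv_into_f_f[OF inj_idx]) (auto simp: aux_labels_def)
  then show ?thesis unfolding lift_def w_var_def by simp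
qed

lemma marginal_lift:
  assumes "k < n - 2" "C \<subseteq> fan_bag n k" "T \<subseteq> C"
  shows "marginal (fan_bag n k) (mu (lift z) k) C T = indep_prob C (node_val z) T"
proof -
  have "marginal (fan_bag n k) (mu (lift z) k) C T = marginal (fan_bag n k) (indep_prob (fan_bag n k) (node_val z)) C T"
    unfolding marginal_def by (rule sum.cong) (use lift_mu_var assms in auto)
  also have "\<dots> = indep_prob C (node_val z) T"
    by (rule marginal_indep_prob) (use assms finite_fan_bag in auto)
  finally show ?thesis .
qed

context
  fixes z :: "'a coord \<Rightarrow> real" assumes z: "z \<in> QP_points V E Lm Lp"
begin

lemma node_val_bounds: "i < n \<Longrightarrow> 0 \<le> node_val z i \<and> node_val z i \<le> 1"
  using z f_in_V unfolding QP_points_def node_val_def by auto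

lemma lift_mu_nonneg: "k < n - 2 \<Longrightarrow> T \<subseteq> fan_bag n k \<Longrightarrow> 0 \<le> mu (lift z) k T"
  using lift_mu_var node_val_bounds fan_bag_lt by (auto intro!: indep_prob_nonneg)

lemma lift_normalized: "k < n - 2 \<Longrightarrow> marginal (fan_bag n k) (mu (lift z) k) {} {} = 1"
  by (simp add: marginal_lift indep_prob_def)

lemma lift_consistent: "Suc k < n - 2 \<Longrightarrow> T \<subseteq> fan_bag n k \<inter> fan_bag n (Suc k) \<Longrightarrow>
    marginal (fan_bag n k) (mu (lift z) k) (fan_bag n k \<inter> fan_bag n (Suc k)) T =
    marginal (fan_bag n (Suc k)) (mu (lift z) (Suc k)) (fan_bag n k \<inter> fan_bag n (Suc k)) T"
  by (simp add: marginal_lift)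

lemma lift_node_var: "k < n - 2 \<Longrightarrow> i \<in> fan_bag n k \<Longrightarrow>
    lift z (node_var i) = marginal (fan_bag n k) (mu (lift z) k) {i} {i}"
  by (simp add: marginal_lift indep_prob_def node_var_def node_val_def)

lemma lift_edge_var:
  assumes "k < n - 2" "i < n" "i \<in> fan_bag n k" "cyc_succ n i \<in> fan_bag n k"
  shows "lift z (edge_var i) = marginal (fan_bag n k) (mu (lift z) k) {i, cyc_succ n i} {i, cyc_succ n i}"
  using assms z edge_in_E[OF \<open>i < n\<close>] cyc_neighbours_distinct(1)[OF n3 \<open>i < n\<close>]
  by (simp add: QP_points_def marginal_lift indep_prob_def edge_var_def node_val_def)

lemma lift_minus_loop:
  assumes "k < n - 2" "i \<in> fan_bag n k" "i \<in> minus_pos"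
  shows "lift z (loop_var i) \<le> marginal (fan_bag n k) (mu (lift z) k) {i} {i}"
proof -
  have "lift z (loop_var i) \<le> (node_val z i)\<^sup>2"
    using z assms unfolding QP_points_def minus_pos_def node_val_def loop_var_def by auto
  also have "\<dots> \<le> node_val z i"
    using node_val_bounds[OF minus_pos_lt[OF \<open>i \<in> minus_pos\<close>]] by (simp add: power2_eq_square mult_left_le)
  finally show ?thesis using assms by (simp add: marginal_lift indep_prob_def)
qed

lemma lift_plus_loop:
  assumes "p \<in> plus_pos"
  shows "(\<Sum>T\<in>Pow (cyc_nbrs n p). lift z (w_var p T)) \<le> lift z (loop_var p)"
proof -
  have "(\<Sum>T\<in>Pow (cyc_nbrs n p). lift z (w_var p T))
      = (\<Sum>T\<in>Pow (cyc_nbrs n p). indep_prob (cyc_nbrs n p) (node_val z) T) * (node_val z p)\<^sup>2"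
    unfolding sum_distrib_right by (rule sum.cong) (use lift_w_var assms in auto)
  also have "\<dots> = (node_val z p)\<^sup>2" by (simp add: sum_indep_prob)
  also have "\<dots> \<le> lift z (loop_var p)"
    using z assms unfolding QP_points_def plus_pos_def node_val_def loop_var_def by auto
  finally show ?thesis .
qed

lemma lift_cone:
  assumes p: "p \<in> plus_pos" and k: "k < n - 2" "{cyc_pred n p, p, cyc_succ n p} \<subseteq> fan_bag n k"
    and T: "T \<subseteq> cyc_nbrs n p"
  shows "(marginal (fan_bag n k) (mu (lift z) k) {cyc_pred n p, p, cyc_succ n p} (insert p T))\<^sup>2
      \<le> lift z (w_var p T) * marginal (fan_bag n k) (mu (lift z) k) (cyc_nbrs n p) T \<and>
    0 \<le> lift z (w_var p T) \<and> 0 \<le> marginal (fan_bag n k) (mu (lift z) k) (cyc_nbrs n p) T"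
proof -
  have p_lt: "p < n" by (rule plus_pos_lt[OF p])
  have "marginal (fan_bag n k) (mu (lift z) k) {cyc_pred n p, p, cyc_succ n p} (insert p T)
      = indep_prob (insert p (cyc_nbrs n p)) (node_val z) (insert p T)"
    using k T by (subst marginal_lift) (auto simp: insert_commute)
  also have "\<dots> = node_val z p * indep_prob (cyc_nbrs n p) (node_val z) T"
    by (rule indep_prob_insert) (use cyc_neighbours_distinct[OF n3 p_lt] T in auto)
  finally have triple: "marginal (fan_bag n k) (mu (lift z) k) {cyc_pred n p, p, cyc_succ n p} (insert p T)
      = node_val z p * indep_prob (cyc_nbrs n p) (node_val z) T" .
  have pair: "marginal (fan_bag n k) (mu (lift z) k) (cyc_nbrs n p) T = indep_prob (cyc_nbrs n p) (node_val z) T"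
    using k T by (subst marginal_lift) auto
  have "0 \<le> indep_prob (cyc_nbrs n p) (node_val z) T"
    by (rule indep_prob_nonneg) (use node_val_bounds cyc_pred_lt cyc_succ_lt p_lt T in auto)
  then show ?thesis
    unfolding triple pair lift_w_var[OF p T] by (simp add: power2_eq_square)
qed

lemma moment_conditions_lift: "moment_conditions (lift z)"
  unfolding moment_conditions_def
  by (intro conjI allI impI ballI)
    (simp_all add: lift_mu_nonneg lift_normalized lift_consistent lift_node_var lift_edge_var
      lift_minus_loop lift_plus_loop lift_cone)

end

lemma QP_subset_projected_set: "QP V E Lm Lp \<subseteq> projected_set I formulation"
proof
  fix z assume "z \<in> QP V E Lm Lp"
  then obtain K :: nat and c p where c: "\<forall>i<K. 0 \<le> c i" "(\<Sum>i<K. c i) = 1"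
    and p: "\<forall>i<K. p i \<in> QP_points V E Lm Lp" and z: "z = (\<lambda>x. \<Sum>i<K. c i * p i x)"
    unfolding QP_eq_conv_hull conv_hull_def by blast
  define x where "x v = (\<Sum>i<K. c i * lift (p i) v)" for v
  have "feasible I formulation x"
    unfolding x_def
  proof (rule feasible_convex_combination)
    show "feasible I formulation (lift (p j))" if "j < K" for j
      using moment_conditions_lift p that feasible_iff_moment_conditions by simp
  qed (use c in \<open>auto simp: formulation_simps cone_cons_def\<close>)
  moreover have "z = (\<lambda>c. if c \<in> I then x (Inl c) else 0)"
    using p unfolding z x_def QP_points_def I_def by auto
  ultimately show "z \<in> projected_set I formulation"
    unfolding projected_set_def by auto
qed

subsection \<open>Every feasible point projects into QP(G)\<close>

definition pos :: "'a \<Rightarrow> nat" where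
  "pos = the_inv_into {..<n} f"

lemma inj_f: "inj_on f {..<n}"
  using bij_betw_imp_inj_on[OF f_bij] .

lemma pos_f: "i < n \<Longrightarrow> pos (f i) = i"
  unfolding pos_def by (rule the_inv_into_f_f[OF inj_f]) simp

lemma f_pos: "v \<in> V \<Longrightarrow> f (pos v) = v"
  unfolding pos_def by (rule f_the_inv_into_f[OF inj_f]) (use f_bij in \<open>simp add: bij_betw_def\<close>)

lemma pos_lt: "v \<in> V \<Longrightarrow> pos v < n"
  using f_bij the_inv_into_into[OF inj_f, of v "{..<n}"] unfolding pos_def bij_betw_def by simp

lemma f_neq_f_succ: "i < n \<Longrightarrow> f i \<noteq> f (cyc_succ n i)"
  using inj_on_eq_iff[OF inj_f] cyc_succ_lt cyc_neighbours_distinct(1)[OF n3] by fastforce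

lemma succ_not_plus: "p \<in> plus_pos \<Longrightarrow> cyc_succ n p \<notin> plus_pos"
  using Lp_stable edge_in_E[OF plus_pos_lt] unfolding stable_set_def plus_pos_def by blast

lemma pred_not_plus: "p \<in> plus_pos \<Longrightarrow> cyc_pred n p \<notin> plus_pos"
  using succ_not_plus[of "cyc_pred n p"] cyc_succ_pred[OF plus_pos_lt] by force

lemma exists_glued_distribution:
  assumes "moment_conditions x"
  obtains D where "\<And>A. A \<subseteq> {..<n} \<Longrightarrow> 0 \<le> D A"
    and "\<And>k T. k < n - 2 \<Longrightarrow> T \<subseteq> fan_bag n k \<Longrightarrow> marginal {..<n} D (fan_bag n k) T = mu x k T"
proof -
  have "0 < n - 2" using n3 by simp
  obtain D where "\<And>A. A \<subseteq> (\<Union>j<n-2. fan_bag n j) \<Longrightarrow> 0 \<le> D A"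
    and "\<And>k T. k < n - 2 \<Longrightarrow> T \<subseteq> fan_bag n k \<Longrightarrow> marginal (\<Union>j<n-2. fan_bag n j) D (fan_bag n k) T = mu x k T"
    by (rule marginal_glue_chain[where B="fan_bag n" and N="n - 2" and \<mu>="mu x"])
      (use assms \<open>0 < n - 2\<close> finite_fan_bag fan_bag_running_intersection
        in \<open>auto simp: moment_conditions_def\<close>)
  then show ?thesis using that unfolding Union_fan_bag[OF n3] by blast
qed

context
  fixes x :: "'a coord + nat \<Rightarrow> real" and D :: "nat set \<Rightarrow> real"
  assumes moment: "moment_conditions x" and D_nonneg: "\<And>A. A \<subseteq> {..<n} \<Longrightarrow> 0 \<le> D A"
    and D_marginal: "\<And>k T. k < n - 2 \<Longrightarrow> T \<subseteq> fan_bag n k \<Longrightarrow> marginal {..<n} D (fan_bag n k) T = mu x k T"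
begin

lemma marginal_eq_bag:
  assumes "k < n - 2" "C \<subseteq> fan_bag n k"
  shows "marginal {..<n} D C T = marginal (fan_bag n k) (mu x k) C T"
  by (rule marginal_eq_on_subset[OF _ finite_fan_bag finite_fan_bag assms(2)])
    (use D_marginal assms(1) in \<open>auto simp: marginal_self\<close>)

lemma sum_D_eq_1: "(\<Sum>A\<in>Pow {..<n}. D A) = 1"
proof -
  have "0 < n - 2" using n3 by simp
  then have "marginal {..<n} D {} {} = 1"
    using marginal_eq_bag[of 0 "{}" "{}"] moment unfolding moment_conditions_def by simp
  moreover have "{A. A \<subseteq> {..<n} \<and> A \<inter> {} = {}} = Pow {..<n}" by auto
  ultimately show ?thesis unfolding marginal_def by simp
qed

lemma node_var_eq: "i < n \<Longrightarrow> x (node_var i) = marginal {..<n} D {i} {i}"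
  using node_in_fan_bag[OF n3] marginal_eq_bag moment unfolding moment_conditions_def
  by (metis empty_subsetI insert_subset)

lemma edge_var_eq: "i < n \<Longrightarrow> x (edge_var i) = marginal {..<n} D {i, cyc_succ n i} {i, cyc_succ n i}"
  using edge_in_fan_bag[OF n3] marginal_eq_bag moment unfolding moment_conditions_def
  by (metis empty_subsetI insert_subset)

lemma minus_loop_le: "i \<in> minus_pos \<Longrightarrow> x (loop_var i) \<le> marginal {..<n} D {i} {i}"
  using node_in_fan_bag[OF n3 minus_pos_lt] marginal_eq_bag moment unfolding moment_conditions_def
  by (metis empty_subsetI insert_subset)

lemma plus_loop_ge: "p \<in> plus_pos \<Longrightarrow> (\<Sum>T\<in>Pow (cyc_nbrs n p). x (w_var p T)) \<le> x (loop_var p)"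
  using moment unfolding moment_conditions_def by blast

lemma cone_ineq:
  assumes p: "p \<in> plus_pos" and T: "T \<subseteq> cyc_nbrs n p"
  shows "(marginal {..<n} D {cyc_pred n p, p, cyc_succ n p} (insert p T))\<^sup>2
      \<le> x (w_var p T) * marginal {..<n} D (cyc_nbrs n p) T \<and> 0 \<le> x (w_var p T)"
proof -
  obtain k where k: "k < n - 2" "{cyc_pred n p, p, cyc_succ n p} \<subseteq> fan_bag n k"
    using neighbourhood_in_fan_bag[OF n3 plus_pos_lt[OF p]] by blast
  then have "cyc_nbrs n p \<subseteq> fan_bag n k" by auto
  then show ?thesis
    using moment p k T marginal_eq_bag[OF k] marginal_eq_bag[OF k(1)]
    unfolding moment_conditions_def by simp
qed

text \<open>The point of QP(G) attached to a subset \<open>A\<close> is its 0/1 indicator vector, except that a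
  plus-loop node takes its conditional probability given \<open>A\<close> on its neighbours. Since no two
  plus-loop nodes are adjacent, the neighbours of such a node keep 0/1 values.\<close>

definition vertex_val :: "nat set \<Rightarrow> nat \<Rightarrow> real" where
  "vertex_val A i = (if i \<in> plus_pos then cond_prob {..<n} D i (cyc_pred n i) (cyc_succ n i) (A \<inter> cyc_nbrs n i)
     else if i \<in> A then 1 else 0)"

lemma vertex_val_bounds: "i < n \<Longrightarrow> 0 \<le> vertex_val A i \<and> vertex_val A i \<le> 1"
  unfolding vertex_val_def
  using cond_prob_bounds[OF finite_lessThan D_nonneg] cyc_neighbours_distinct[OF n3] by simp

lemma sum_vertex_val: "i < n \<Longrightarrow> (\<Sum>A\<in>Pow {..<n}. D A * vertex_val A i) = marginal {..<n} D {i} {i}"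
proof (cases "i \<in> plus_pos")
  case True
  moreover assume "i < n"
  ultimately show ?thesis
    unfolding vertex_val_def
    using sum_cond_prob[OF finite_lessThan D_nonneg] cyc_neighbours_distinct[OF n3] by simp
next
  case False
  moreover assume "i < n"
  ultimately show ?thesis
    unfolding vertex_val_def
    using sum_indicator_subset[of "{..<n}" "{i}" D] by simp
qed

lemma sum_vertex_val_edge:
  assumes i: "i < n"
  shows "(\<Sum>A\<in>Pow {..<n}. D A * (vertex_val A i * vertex_val A (cyc_succ n i)))
    = marginal {..<n} D {i, cyc_succ n i} {i, cyc_succ n i}"
proof -
  let ?j = "cyc_succ n i"
  have j: "?j < n" by (rule cyc_succ_lt[OF i])
  note distinct_i = cyc_neighbours_distinct[OF n3 i] and distinct_j = cyc_neighbours_distinct[OF n3 j]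
  consider "i \<in> plus_pos" | "?j \<in> plus_pos" | "i \<notin> plus_pos" "?j \<notin> plus_pos" by blast
  then show ?thesis
  proof cases
    case 1
    then have "?j \<notin> plus_pos" by (rule succ_not_plus)
    then have "(\<Sum>A\<in>Pow {..<n}. D A * (vertex_val A i * vertex_val A ?j))
        = (\<Sum>A\<in>Pow {..<n}. D A * (cond_prob {..<n} D i ?j (cyc_pred n i) (A \<inter> {?j, cyc_pred n i})
            * (if ?j \<in> A then 1 else 0)))"
      unfolding vertex_val_def using 1 cond_prob_sym[of "{..<n}" D i "cyc_pred n i" ?j]
      by (simp add: insert_commute)
    also have "\<dots> = marginal {..<n} D {?j, i} {?j, i}"
      by (rule sum_cond_prob_indicator[OF finite_lessThan D_nonneg]) (use distinct_i in auto)
    finally show ?thesis by (simp add: insert_commute)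
  next
    case 2
    have pred_j: "cyc_pred n ?j = i" by (rule cyc_pred_succ[OF i])
    have "i \<notin> plus_pos" using pred_not_plus[OF 2] pred_j by simp
    then have "(\<Sum>A\<in>Pow {..<n}. D A * (vertex_val A i * vertex_val A ?j))
        = (\<Sum>A\<in>Pow {..<n}. D A * (cond_prob {..<n} D ?j i (cyc_succ n ?j) (A \<inter> {i, cyc_succ n ?j})
            * (if i \<in> A then 1 else 0)))"
      unfolding vertex_val_def using 2 pred_j by (intro sum.cong) auto
    also have "\<dots> = marginal {..<n} D {i, ?j} {i, ?j}"
      by (rule sum_cond_prob_indicator[OF finite_lessThan D_nonneg]) (use distinct_j pred_j in auto)
    finally show ?thesis .
  next
    case 3
    then have "(\<Sum>A\<in>Pow {..<n}. D A * (vertex_val A i * vertex_val A ?j))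
        = (\<Sum>A\<in>Pow {..<n}. D A * (if {i, ?j} \<subseteq> A then 1 else 0))"
      unfolding vertex_val_def by (intro sum.cong) auto
    also have "\<dots> = marginal {..<n} D {i, ?j} {i, ?j}"
      by (rule sum_indicator_subset) (use i j in auto)
    finally show ?thesis .
  qed
qed

lemma sum_vertex_val_square_minus:
  assumes "i \<in> minus_pos"
  shows "(\<Sum>A\<in>Pow {..<n}. D A * (vertex_val A i)\<^sup>2) = marginal {..<n} D {i} {i}"
proof -
  have "i \<notin> plus_pos" using assms plus_minus_disjoint by auto
  then have "(\<Sum>A\<in>Pow {..<n}. D A * (vertex_val A i)\<^sup>2) = (\<Sum>A\<in>Pow {..<n}. D A * vertex_val A i)"
    unfolding vertex_val_def by (intro sum.cong) auto
  also have "\<dots> = marginal {..<n} D {i} {i}" by (rule sum_vertex_val[OF minus_pos_lt[OF assms]])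
  finally show ?thesis .
qed

text \<open>By the cone constraints, \<open>w\<^sub>p(T)\<close> bounds the contribution \<open>Pr[p, T]\<^sup>2 / Pr[T]\<close> of \<open>T\<close> to the
  second moment of the conditional probability of \<open>p\<close>.\<close>

lemma sum_vertex_val_square_plus:
  assumes p: "p \<in> plus_pos"
  shows "(\<Sum>A\<in>Pow {..<n}. D A * (vertex_val A p)\<^sup>2) \<le> x (loop_var p)"
proof -
  have distinct: "p \<noteq> cyc_pred n p" "p \<noteq> cyc_succ n p" "cyc_pred n p \<noteq> cyc_succ n p"
    using cyc_neighbours_distinct[OF n3 plus_pos_lt[OF p]] by auto
  have "(\<Sum>A\<in>Pow {..<n}. D A * (vertex_val A p)\<^sup>2)
      = (\<Sum>T\<in>Pow (cyc_nbrs n p). (marginal {..<n} D {cyc_pred n p, p, cyc_succ n p} (insert p T))\<^sup>2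
          / marginal {..<n} D (cyc_nbrs n p) T)"
    unfolding vertex_val_def using p sum_cond_prob_square[OF finite_lessThan D_nonneg distinct] by simp
  also have "\<dots> \<le> (\<Sum>T\<in>Pow (cyc_nbrs n p). x (w_var p T))"
  proof (rule sum_mono)
    fix T assume "T \<in> Pow (cyc_nbrs n p)"
    then have cone: "(marginal {..<n} D {cyc_pred n p, p, cyc_succ n p} (insert p T))\<^sup>2
        \<le> x (w_var p T) * marginal {..<n} D (cyc_nbrs n p) T" "0 \<le> x (w_var p T)"
      using cone_ineq[OF p] by auto
    have "0 \<le> marginal {..<n} D (cyc_nbrs n p) T" by (rule marginal_nonneg[OF D_nonneg])
    then show "(marginal {..<n} D {cyc_pred n p, p, cyc_succ n p} (insert p T))\<^sup>2
        / marginal {..<n} D (cyc_nbrs n p) T \<le> x (w_var p T)"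
      using cone by (cases "marginal {..<n} D (cyc_nbrs n p) T = 0") (auto simp: pos_divide_le_eq)
  qed
  also have "\<dots> \<le> x (loop_var p)" by (rule plus_loop_ge[OF p])
  finally show ?thesis .
qed

definition vertex_point :: "nat set \<Rightarrow> 'a coord \<Rightarrow> real" where
  "vertex_point A c = (case c of
      CV v \<Rightarrow> if v \<in> V then vertex_val A (pos v) else 0
    | CE e \<Rightarrow> if e \<in> E then (\<Prod>v\<in>e. vertex_val A (pos v)) else 0
    | CL v \<Rightarrow> if v \<in> Lm \<union> Lp then (vertex_val A (pos v))\<^sup>2 else 0)"

lemma vertex_point_in_QP_points: "vertex_point A \<in> QP_points V E Lm Lp"
proof -
  have edge: "vertex_point A (CE {v, w}) = vertex_point A (CV v) * vertex_point A (CV w)"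
    if vw: "{v, w} \<in> E" for v w
  proof -
    obtain i where i: "i < n" "{v, w} = {f i, f (cyc_succ n i)}" using E_cases[OF vw] by blast
    then have "v \<noteq> w" using f_neq_f_succ[OF i(1)] by (auto simp: doubleton_eq_iff)
    moreover have "v \<in> V" "w \<in> V" using i f_in_V cyc_succ_lt by (auto simp: doubleton_eq_iff)
    ultimately show ?thesis using vw by (simp add: vertex_point_def)
  qed
  have "vertex_point A c = 0" if "c \<notin> coords V E Lm Lp" for c
    using that by (cases c) (auto simp: coords_def vertex_point_def)
  then show ?thesis
    unfolding QP_points_def using edge Lm_subset Lp_subset vertex_val_bounds pos_lt
    by (auto simp: vertex_point_def)
qed

definition glued_point :: "'a coord \<Rightarrow> real" where
  "glued_point c = (\<Sum>A\<in>Pow {..<n}. D A * vertex_point A c)"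

lemma glued_point_in_QP: "glued_point \<in> QP V E Lm Lp"
  unfolding glued_point_def QP_eq_conv_hull
  by (rule finite_sum_in_conv_hull) (use D_nonneg sum_D_eq_1 vertex_point_in_QP_points in auto)

lemma glued_point_outside: "c \<notin> I \<Longrightarrow> glued_point c = 0"
proof -
  assume "c \<notin> I"
  then have "vertex_point A c = 0" for A
    using vertex_point_in_QP_points unfolding QP_points_def I_def by blast
  then show ?thesis unfolding glued_point_def by simp
qed

lemma glued_point_node: "v \<in> V \<Longrightarrow> glued_point (CV v) = x (Inl (CV v))"
  using node_var_eq[OF pos_lt] sum_vertex_val[OF pos_lt] f_pos
  unfolding glued_point_def vertex_point_def node_var_def by simp

lemma glued_point_edge: "e \<in> E \<Longrightarrow> glued_point (CE e) = x (Inl (CE e))"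
proof -
  assume "e \<in> E"
  then obtain i where i: "i < n" "e = {f i, f (cyc_succ n i)}" using E_cases by blast
  then show ?thesis
    using edge_var_eq[OF i(1)] sum_vertex_val_edge[OF i(1)] edge_in_E[OF i(1)]
      f_neq_f_succ[OF i(1)] pos_f[OF i(1)] pos_f[OF cyc_succ_lt[OF i(1)]]
    unfolding glued_point_def vertex_point_def edge_var_def by simp
qed

lemma glued_point_loop: "v \<in> Lm \<union> Lp \<Longrightarrow> glued_point (CL v) = (\<Sum>A\<in>Pow {..<n}. D A * (vertex_val A (pos v))\<^sup>2)"
  unfolding glued_point_def vertex_point_def by simp

lemma glued_point_plus_loop: "v \<in> Lp \<Longrightarrow> glued_point (CL v) \<le> x (Inl (CL v))"
  using sum_vertex_val_square_plus[of "pos v"] glued_point_loop[of v] f_pos pos_lt Lp_subset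
  unfolding plus_pos_def loop_var_def by auto

lemma glued_point_minus_loop: "v \<in> Lm \<Longrightarrow> x (Inl (CL v)) \<le> glued_point (CL v)"
  using minus_loop_le[of "pos v"] sum_vertex_val_square_minus[of "pos v"] glued_point_loop[of v]
    f_pos pos_lt Lm_subset
  unfolding minus_pos_def loop_var_def by auto

lemma projection_in_QP: "(\<lambda>c. if c \<in> I then x (Inl c) else 0) \<in> QP V E Lm Lp"
proof (rule QP_loop_shift[OF glued_point_in_QP Lm_Lp_disjoint Lm_subset Lp_subset])
  fix c
  assume ne: "(if c \<in> I then x (Inl c) else 0) \<noteq> glued_point c"
  then have "c \<in> I" using glued_point_outside by (cases "c \<in> I") auto
  then consider v where "c = CV v" "v \<in> V" | e where "c = CE e" "e \<in> E" | v where "c = CL v" "v \<in> Lp"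
    | v where "c = CL v" "v \<in> Lm"
    unfolding I_def coords_def by auto
  then show "(\<exists>v\<in>Lp. c = CL v \<and> glued_point c \<le> (if c \<in> I then x (Inl c) else 0)) \<or>
      (\<exists>v\<in>Lm. c = CL v \<and> (if c \<in> I then x (Inl c) else 0) \<le> glued_point c)"
    using ne \<open>c \<in> I\<close>
    by cases (auto simp: glued_point_node glued_point_edge glued_point_plus_loop glued_point_minus_loop)
qed

end

lemma projected_set_subset_QP: "projected_set I formulation \<subseteq> QP V E Lm Lp"
proof
  fix y assume "y \<in> projected_set I formulation"
  then obtain x where y: "y = (\<lambda>c. if c \<in> I then x (Inl c) else 0)" and "feasible I formulation x"
    unfolding projected_set_def by blast
  then have "moment_conditions x" by (simp add: feasible_iff_moment_conditions)
  moreover obtain D where "\<And>A. A \<subseteq> {..<n} \<Longrightarrow> 0 \<le> D A"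
    and "\<And>k T. k < n - 2 \<Longrightarrow> T \<subseteq> fan_bag n k \<Longrightarrow> marginal {..<n} D (fan_bag n k) T = mu x k T"
    using exists_glued_distribution[OF calculation] by blast
  ultimately show "y \<in> QP V E Lm Lp" unfolding y by (rule projection_in_QP)
qed

end

subsection \<open>Size of the formulation\<close>

lemma card_Pow_le: "finite A \<Longrightarrow> card A \<le> k \<Longrightarrow> card (Pow A) \<le> 2 ^ k"
  by (simp add: card_Pow power_increasing)

lemma card_Pow_fan_bag: "card (Pow (fan_bag n k)) \<le> 32"
  using card_Pow_le[OF finite_fan_bag card_fan_bag] by simp

lemma card_Pow_pair: "card (Pow {a, b}) \<le> 4"
  using card_Pow_le[of "{a, b}" 2] by (simp add: card_insert_le_m1)

lemma card_Sigma_le: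
  assumes "finite K" "\<And>k. k \<in> K \<Longrightarrow> finite (B k) \<and> card (B k) \<le> c"
  shows "card (SIGMA k:K. B k) \<le> card K * c"
  using assms sum_bounded_above[of K "\<lambda>k. card (B k)" c] by (simp add: card_SigmaI)

lemma card_UN_le_mult:
  assumes "finite K" "\<And>k. k \<in> K \<Longrightarrow> card (A k) \<le> c"
  shows "card (\<Union>k\<in>K. A k) \<le> card K * c"
  using card_UN_le[OF assms(1), of A] sum_bounded_above[of K "\<lambda>k. card (A k)" c] assms(2) by simp

context cycle_formulation
begin

lemma card_V: "card V = n"
  using bij_betw_same_card[OF f_bij] by simp

lemma card_plus_pos: "card plus_pos \<le> n"
  unfolding plus_pos_def by (rule order_trans[OF card_mono[of "{..<n}"]]) auto

lemma card_I: "card I \<le> 3 * n"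
proof -
  have "card I \<le> card (CV ` V) + card (CE ` E) + card (CL ` (Lm \<union> Lp))"
    unfolding I_def coords_def by (meson card_Un_le add_right_mono le_trans)
  also have "\<dots> \<le> card V + card E + card (Lm \<union> Lp)"
    by (intro add_mono card_image_le)
      (use finite_V finite_I Lm_subset Lp_subset in \<open>auto simp: I_def coords_def E_eq intro: finite_subset\<close>)
  also have "card E \<le> n"
  proof -
    have "E = (\<lambda>i. {f i, f ((i + 1) mod n)}) ` {..<n}" unfolding E_eq by auto
    then show ?thesis using card_image_le[of "{..<n}"] by simp
  qed
  also have "card (Lm \<union> Lp) \<le> card V"
    using Lm_subset Lp_subset finite_V by (intro card_mono) auto
  finally show ?thesis using card_V by simp
qed

lemma card_Sigma_fan_bag_Pow: "card (SIGMA k:{..<n-2}. Pow (fan_bag n k)) \<le> 32 * n"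
  using card_Sigma_le[of "{..<n-2}" "\<lambda>k. Pow (fan_bag n k)" 32] card_Pow_fan_bag
  by (simp add: finite_fan_bag)

lemma card_Sigma_fan_bag: "card (SIGMA k:{..<n-2}. fan_bag n k) \<le> 5 * n"
  using card_Sigma_le[of "{..<n-2}" "fan_bag n" 5] card_fan_bag by (simp add: finite_fan_bag)

lemma num_aux_le: "num_aux \<le> 36 * n"
proof -
  have "num_aux \<le> card (SIGMA k:{..<n-2}. Pow (fan_bag n k)) + card (SIGMA p:plus_pos. Pow (cyc_nbrs n p))"
    unfolding num_aux_def aux_labels_eq
    by (meson card_Un_le card_image_le add_mono le_trans finite_SigmaI finite_Pow_iff finite_fan_bag
        finite_lessThan finite_plus_pos finite.emptyI finite_insert)
  also have "card (SIGMA p:plus_pos. Pow (cyc_nbrs n p)) \<le> card plus_pos * 4"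
    by (rule card_Sigma_le) (auto simp: finite_plus_pos card_Pow_pair)
  finally show ?thesis using card_Sigma_fan_bag_Pow card_plus_pos by linarith
qed

lemma finite_Sigma_fan_bag_Pow: "finite (SIGMA k:{..<n-2}. Pow (fan_bag n k))"
  and finite_Sigma_fan_bag: "finite (SIGMA k:{..<n-2}. fan_bag n k)"
  by (auto simp: finite_fan_bag)

lemma card_consistency_cons: "card consistency_cons \<le> 64 * n"
proof -
  let ?S = "SIGMA k:{k. Suc k < n - 2}. Pow (fan_bag n k \<inter> fan_bag n (Suc k))"
  have sub: "?S \<subseteq> (SIGMA k:{..<n-2}. Pow (fan_bag n k))" by auto
  have "card consistency_cons \<le> card ?S * 2"
    unfolding consistency_cons_def
    by (rule card_UN_le_mult[OF finite_subset[OF sub finite_Sigma_fan_bag_Pow]]) (auto simp: card_equality_cons)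
  then show ?thesis using card_mono[OF finite_Sigma_fan_bag_Pow sub] card_Sigma_fan_bag_Pow by linarith
qed

lemma card_edge_cons: "card edge_cons \<le> 10 * n"
proof -
  let ?S = "SIGMA k:{..<n-2}. {i. i < n \<and> i \<in> fan_bag n k \<and> cyc_succ n i \<in> fan_bag n k}"
  have sub: "?S \<subseteq> (SIGMA k:{..<n-2}. fan_bag n k)" by auto
  have "card edge_cons \<le> card ?S * 2"
    unfolding edge_cons_def
    by (rule card_UN_le_mult[OF finite_subset[OF sub finite_Sigma_fan_bag]]) (auto simp: card_equality_cons)
  then show ?thesis using card_mono[OF finite_Sigma_fan_bag sub] card_Sigma_fan_bag by linarith
qed

lemma card_minus_loop_cons: "card minus_loop_cons \<le> 5 * n"
proof -
  let ?S = "SIGMA k:{..<n-2}. fan_bag n k \<inter> minus_pos"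
  have sub: "?S \<subseteq> (SIGMA k:{..<n-2}. fan_bag n k)" by auto
  have "card minus_loop_cons \<le> card ?S"
    unfolding minus_loop_cons_def by (rule card_image_le) (rule finite_subset[OF sub finite_Sigma_fan_bag])
  then show ?thesis using card_mono[OF finite_Sigma_fan_bag sub] card_Sigma_fan_bag by linarith
qed

lemma card_lin_cons: "card lin_cons \<le> 124 * n"
proof -
  have "card nonneg_cons \<le> 32 * n"
    unfolding nonneg_cons_def
    by (rule le_trans[OF card_image_le[OF finite_Sigma_fan_bag_Pow] card_Sigma_fan_bag_Pow])
  moreover have "card normalization_cons \<le> card {..<n-2} * 2"
    unfolding normalization_cons_def by (rule card_UN_le_mult) (auto simp: card_equality_cons)
  moreover have "card node_cons \<le> card (SIGMA k:{..<n-2}. fan_bag n k) * 2"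
    unfolding node_cons_def
    by (rule card_UN_le_mult[OF finite_Sigma_fan_bag]) (auto simp: card_equality_cons)
  moreover have "card plus_loop_cons \<le> card plus_pos"
    unfolding plus_loop_cons_def by (rule card_image_le[OF finite_plus_pos])
  moreover have "card lin_cons \<le> card nonneg_cons + card normalization_cons + card consistency_cons
      + card node_cons + card edge_cons + card minus_loop_cons + card plus_loop_cons"
    unfolding lin_cons_def by (meson card_Un_le add_right_mono le_trans)
  ultimately show ?thesis
    using card_consistency_cons card_edge_cons card_minus_loop_cons card_Sigma_fan_bag card_plus_pos
    by simp
qed

lemma card_cone_cons: "card cone_cons \<le> 4 * n * n"
proof -
  let ?K = "\<lambda>p. {k. k < n - 2 \<and> {cyc_pred n p, p, cyc_succ n p} \<subseteq> fan_bag n k}"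
  let ?S = "SIGMA p:plus_pos. SIGMA k:?K p. Pow (cyc_nbrs n p)"
  have inner: "card (SIGMA k:?K p. Pow (cyc_nbrs n p)) \<le> n * 4" for p
  proof -
    have "card (SIGMA k:?K p. Pow (cyc_nbrs n p)) \<le> card (?K p) * 4"
      by (rule card_Sigma_le) (auto simp: card_Pow_pair)
    moreover have "card (?K p) \<le> n" by (rule order_trans[OF card_mono[of "{..<n}"]]) auto
    ultimately show ?thesis by linarith
  qed
  have "card ?S \<le> card plus_pos * (n * 4)"
    by (rule card_Sigma_le) (use inner finite_plus_pos in auto)
  also have "\<dots> \<le> 4 * n * n" using card_plus_pos by simp
  finally have "card ?S \<le> 4 * n * n" .
  moreover have "card cone_cons \<le> card ?S"
    unfolding cone_cons_def by (rule card_image_le) (auto simp: finite_plus_pos)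
  ultimately show ?thesis by linarith
qed

theorem formulation_correct_and_small:
  "projected_set I formulation = QP V E Lm Lp \<and>
   num_vars I formulation \<le> 200 * card V ^ 2 + 200 \<and> num_constraints formulation \<le> 200 * card V ^ 2 + 200"
proof -
  have "num_vars I formulation \<le> 39 * n"
    unfolding num_vars_def formulation_simps using card_I num_aux_le by simp
  moreover have "num_constraints formulation \<le> 124 * n + 4 * n * n"
    unfolding num_constraints_def formulation_simps using card_lin_cons card_cone_cons by simp
  moreover have "n \<le> n * n" by simp
  ultimately show ?thesis
    using QP_subset_projected_set projected_set_subset_QP
    unfolding card_V power2_eq_square by (intro conjI equalityI) linarith+
qed

end

theorem proposition9:
  "\<exists>(C::nat) (d::nat). \<forall>(V::'a set) E Lm Lp.
     graph_with_loops V E Lm Lp \<and> stable_set E Lp \<and> chordless_cycle V E \<longrightarrow>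
     (\<exists>F. projected_set (coords V E Lm Lp) F = QP V E Lm Lp \<and>
          num_vars (coords V E Lm Lp) F \<le> C * card V ^ d + C \<and>
          num_constraints F \<le> C * card V ^ d + C)"
proof (rule exI[of _ 200], rule exI[of _ 2], intro allI impI)
  fix V :: "'a set" and E Lm Lp
  assume G: "graph_with_loops V E Lm Lp \<and> stable_set E Lp \<and> chordless_cycle V E"
  then obtain n :: nat and f where "3 \<le> n" "bij_betw f {..<n} V" "E = {{f i, f ((i + 1) mod n)} | i. i < n}"
    unfolding chordless_cycle_def by blast
  moreover obtain idx where "bij_betw idx (aux_labels n {i. i < n \<and> f i \<in> Lp})
      {..<card (aux_labels n {i. i < n \<and> f i \<in> Lp})}"
    using ex_bij_betw_finite_nat[OF finite_aux_labels[of "{i. i < n \<and> f i \<in> Lp}" n]]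
    by (auto simp: atLeast0LessThan)
  ultimately interpret cycle_formulation V E Lm Lp n f idx
    using G unfolding graph_with_loops_def by unfold_locales auto
  show "\<exists>F. projected_set (coords V E Lm Lp) F = QP V E Lm Lp \<and>
      num_vars (coords V E Lm Lp) F \<le> 200 * card V ^ 2 + 200 \<and>
      num_constraints F \<le> 200 * card V ^ 2 + 200"
    using formulation_correct_and_small unfolding I_def by blast
qed

end
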